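(* Let $k$ be an algebraically closed field, $K$ a finitely generated field extension of $k$ with $\operatorname{tr.deg}_k K = n$, and $R \subseteq K$ a discrete valuation ring containing $k$, induced by a valuation $\nu$ on $K$, with maximal ideal $m_R$ and $\operatorname{tr.deg}_k R/m_R = n-1$. Let $K' \subseteq K$ be a subfield containing $k$, finitely generated over $k$, with $\operatorname{tr.deg}_k K' = m \leq n$. If $K' \cap m_R \neq \{0\}$, then $$\operatorname{tr.deg}_k (K' \cap R)/(K' \cap m_R) = m - 1.$$ *)

theory Defs
  imports "HOL-Computational_Algebra.Polynomial"
begin

text \<open>Subfields of an ambient field (the ambient type plays the role of K).\<close>
definition is_subfield :: "'a::field set \<Rightarrow> bool" where
  "is_subfield F \<longleftrightarrow> 0 \<in> F \<and> 1 \<in> F \<and>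
     (\<forall>x\<in>F. \<forall>y\<in>F. x + y \<in> F \<and> x * y \<in> F) \<and>
     (\<forall>x\<in>F. - x \<in> F) \<and> (\<forall>x\<in>F. x \<noteq> 0 \<longrightarrow> inverse x \<in> F)"

definition field_gen :: "'a::field set \<Rightarrow> 'a set \<Rightarrow> 'a set" where
  "field_gen k S = \<Inter>{F. is_subfield F \<and> k \<union> S \<subseteq> F}"

definition fin_gen_over :: "'a::field set \<Rightarrow> 'a set \<Rightarrow> bool" where
  "fin_gen_over k L \<longleftrightarrow> (\<exists>S. finite S \<and> L = field_gen k S)"

definition alg_closed_subfield :: "'a::field set \<Rightarrow> bool" where
  "alg_closed_subfield k \<longleftrightarrow> is_subfield k \<and>
     (\<forall>p::'a poly. (\<forall>i. coeff p i \<in> k) \<and> degree p > 0 \<longrightarrow> (\<exists>x\<in>k. poly p x = 0))"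

text \<open>Evaluation of a multivariate polynomial with monomial support M (exponent
  vectors e :: nat \<Rightarrow> nat) and coefficients c at the tuple xs.\<close>
definition mpoly_eval :: "(nat \<Rightarrow> nat) set \<Rightarrow> ((nat \<Rightarrow> nat) \<Rightarrow> 'a::field) \<Rightarrow> 'a list \<Rightarrow> 'a" where
  "mpoly_eval M c xs = (\<Sum>e\<in>M. c e * (\<Prod>i<length xs. (xs ! i) ^ (e i)))"

text \<open>The residues of xs modulo the ideal I are algebraically independent over k:
  no nonzero polynomial over k in length xs variables vanishes at them modulo I.
  With I = {0} this is ordinary algebraic independence.\<close>
definition alg_indep_mod :: "'a::field set \<Rightarrow> 'a set \<Rightarrow> 'a list \<Rightarrow> bool" where
  "alg_indep_mod k I xs \<longleftrightarrow>
     (\<forall>M c. finite M \<and> M \<noteq> {} \<and> (\<forall>e\<in>M. \<forall>i\<ge>length xs. e i = 0) \<and>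
            (\<forall>e\<in>M. c e \<in> k \<and> c e \<noteq> 0) \<longrightarrow> mpoly_eval M c xs \<notin> I)"

text \<open>Transcendence degree over k of the ring A / I equals d (A a ring containing k,
  I an ideal of A with A/I a field).\<close>
definition has_trdeg :: "'a::field set \<Rightarrow> 'a set \<Rightarrow> 'a set \<Rightarrow> nat \<Rightarrow> bool" where
  "has_trdeg k A I d \<longleftrightarrow>
     (\<exists>xs. set xs \<subseteq> A \<and> length xs = d \<and> alg_indep_mod k I xs) \<and>
     (\<forall>xs. set xs \<subseteq> A \<and> alg_indep_mod k I xs \<longrightarrow> length xs \<le> d)"

text \<open>Discrete (normalized, surjective onto Z) valuation on the ambient field;
  only its values on nonzero elements matter.\<close>
definition discrete_valuation :: "('a::field \<Rightarrow> int) \<Rightarrow> bool" where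
  "discrete_valuation \<nu> \<longleftrightarrow>
     (\<forall>x y. x \<noteq> 0 \<and> y \<noteq> 0 \<longrightarrow> \<nu> (x * y) = \<nu> x + \<nu> y) \<and>
     (\<forall>x y. x \<noteq> 0 \<and> y \<noteq> 0 \<and> x + y \<noteq> 0 \<longrightarrow> \<nu> (x + y) \<ge> min (\<nu> x) (\<nu> y)) \<and>
     (\<forall>z. \<exists>x. x \<noteq> 0 \<and> \<nu> x = z)"

definition val_ring :: "('a::field \<Rightarrow> int) \<Rightarrow> 'a set" where
  "val_ring \<nu> = {x. x = 0 \<or> \<nu> x \<ge> 0}"

definition val_ideal :: "('a::field \<Rightarrow> int) \<Rightarrow> 'a set" where
  "val_ideal \<nu> = {x. x = 0 \<or> \<nu> x > 0}"

end

theory Submission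
  imports Defs "HOL-Combinatorics.Permutations" "HOL-Algebra.Finite_Extensions" "HOL-Algebra.QuotRing"
begin

text \<open>
  The residues of \<open>K' \<inter> R\<close> form a subfield of the residue field of \<open>R\<close>; its transcendence
  degree over \<open>k\<close> is computed in the algebraic matroid of the residue field.

  Upper bound: if \<open>x\<^sub>1, \<dots>, x\<^sub>r \<in> K' \<inter> R\<close> have residues algebraically independent over \<open>k\<close> and
  \<open>0 \<noteq> t \<in> K' \<inter> m\<^sub>R\<close>, then \<open>x\<^sub>1, \<dots>, x\<^sub>r, t\<close> are algebraically independent over \<open>k\<close>: in a relation
  \<open>\<Sum> c\<^sub>i t\<^sup>i = 0\<close> with coefficients in \<open>k[x]\<close>, which are units of \<open>R\<close> when nonzero, the term of
  lowest degree has the smallest valuation. Hence \<open>r + 1 \<le> m\<close>.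

  Lower bound: choose \<open>r\<close> maximal, so that every residue of \<open>K' \<inter> R\<close> is algebraic over \<open>k(x)\<close>.
  Completing \<open>x\<close> by part \<open>J\<close> of a residual transcendence basis of \<open>R\<close> (which has \<open>n - 1\<close>
  elements) gives \<open>n - 1 \<le> r + |J|\<close> by the exchange lemma. The residues of \<open>J\<close> are independent
  over the residue field of \<open>K' \<inter> R\<close>, so \<open>J\<close> is algebraically independent over \<open>K'\<close>
  (normalize a relation to have a coefficient of valuation \<open>0\<close>), whence \<open>m + |J| \<le> n\<close>.
\<close>


section \<open>Monomials and their exponent vectors\<close>

definition monom_eval :: "'a::field list \<Rightarrow> (nat \<Rightarrow> nat) \<Rightarrow> 'a" where
  "monom_eval xs e = (\<Prod>i<length xs. (xs ! i) ^ (e i))"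

lemma mpoly_eval_eq_sum_monom: "mpoly_eval M c xs = (\<Sum>e\<in>M. c e * monom_eval xs e)"
  by (simp add: mpoly_eval_def monom_eval_def)

lemma monom_eval_Nil [simp]: "monom_eval [] e = 1"
  by (simp add: monom_eval_def)

lemma monom_eval_zero_exp [simp]: "monom_eval xs (\<lambda>_. 0) = 1"
  by (simp add: monom_eval_def)

lemma monom_eval_single: "monom_eval [a] e = a ^ e 0"
  by (simp add: monom_eval_def)

lemma monom_eval_add_exp: "monom_eval xs (\<lambda>i. e1 i + e2 i) = monom_eval xs e1 * monom_eval xs e2"
  by (simp add: monom_eval_def power_add prod.distrib)

text \<open>An exponent vector on \<open>us @ vs\<close> splits at \<open>p = length us\<close>; the part on \<open>vs\<close>
  is reindexed from \<open>0\<close>.\<close>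

definition exp_low :: "nat \<Rightarrow> (nat \<Rightarrow> nat) \<Rightarrow> nat \<Rightarrow> nat" where
  "exp_low p e = (\<lambda>i. if i < p then e i else 0)"

definition exp_high :: "nat \<Rightarrow> (nat \<Rightarrow> nat) \<Rightarrow> nat \<Rightarrow> nat" where
  "exp_high p e = (\<lambda>i. e (p + i))"

definition exp_join :: "nat \<Rightarrow> (nat \<Rightarrow> nat) \<Rightarrow> (nat \<Rightarrow> nat) \<Rightarrow> nat \<Rightarrow> nat" where
  "exp_join p b g = (\<lambda>i. if i < p then b i else g (i - p))"

lemma exp_join_low_high [simp]: "exp_join p (exp_low p e) (exp_high p e) = e"
  by (auto simp: exp_join_def exp_low_def exp_high_def)

lemma exp_low_join: "\<forall>i\<ge>p. b i = 0 \<Longrightarrow> exp_low p (exp_join p b g) = b"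
  by (auto simp: exp_join_def exp_low_def)

lemma exp_high_join [simp]: "exp_high p (exp_join p b g) = g"
  by (auto simp: exp_join_def exp_high_def)

lemma exp_low_high_eqD: "exp_low p e1 = exp_low p e2 \<Longrightarrow> exp_high p e1 = exp_high p e2 \<Longrightarrow> e1 = e2"
  by (metis exp_join_low_high)

lemma prod_lessThan_add: "(\<Prod>i<p + (q::nat). f i) = (\<Prod>i<p. f i) * (\<Prod>i<q. f (p + i))"
  by (induction q) (auto simp: mult.assoc)

lemma monom_eval_append:
  "monom_eval (us @ vs) e = monom_eval us (exp_low (length us) e) * monom_eval vs (exp_high (length us) e)"
  unfolding monom_eval_def length_append prod_lessThan_add
  by (simp add: exp_low_def exp_high_def nth_append)

lemma monom_eval_append_supported:
  assumes "\<forall>i\<ge>length xs. e i = 0"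
  shows "monom_eval (xs @ ys) e = monom_eval xs e"
proof -
  have "exp_low (length xs) e = e" "exp_high (length xs) e = (\<lambda>_. 0)"
    using assms by (auto simp: exp_low_def exp_high_def)
  then show ?thesis by (simp add: monom_eval_append)
qed

lemma mpoly_eval_append_supported:
  assumes "\<forall>e\<in>M. \<forall>i\<ge>length xs. e i = 0"
  shows "mpoly_eval M c (xs @ ys) = mpoly_eval M c xs"
  unfolding mpoly_eval_eq_sum_monom using assms
  by (intro sum.cong refl) (simp add: monom_eval_append_supported)

lemma mpoly_eval_append_blocks:
  fixes us vs :: "'a::field list"
  assumes "finite M"
  defines "p \<equiv> length us"
  shows "mpoly_eval M c (us @ vs) =
    (\<Sum>g\<in>exp_high p ` M.
       mpoly_eval (exp_low p ` {e\<in>M. exp_high p e = g}) (\<lambda>b. c (exp_join p b g)) us * monom_eval vs g)"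
proof -
  have "mpoly_eval M c (us @ vs) = (\<Sum>e\<in>M. c e * monom_eval us (exp_low p e) * monom_eval vs (exp_high p e))"
    by (simp add: mpoly_eval_eq_sum_monom monom_eval_append mult.assoc p_def)
  also have "\<dots> = (\<Sum>g\<in>exp_high p ` M. \<Sum>e\<in>{e\<in>M. exp_high p e = g}.
                    c e * monom_eval us (exp_low p e) * monom_eval vs (exp_high p e))"
    by (rule sum.group[symmetric]) (use assms in simp_all)
  also have "\<dots> = (\<Sum>g\<in>exp_high p ` M.
       mpoly_eval (exp_low p ` {e\<in>M. exp_high p e = g}) (\<lambda>b. c (exp_join p b g)) us * monom_eval vs g)"
  proof (rule sum.cong[OF refl])
    fix g
    have inj: "inj_on (exp_low p) {e\<in>M. exp_high p e = g}"
      by (rule inj_onI) (auto intro: exp_low_high_eqD)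
    have "mpoly_eval (exp_low p ` {e\<in>M. exp_high p e = g}) (\<lambda>b. c (exp_join p b g)) us
        = (\<Sum>e\<in>{e\<in>M. exp_high p e = g}. c e * monom_eval us (exp_low p e))"
      unfolding mpoly_eval_eq_sum_monom by (subst sum.reindex[OF inj]) (auto intro!: sum.cong)
    then show "(\<Sum>e\<in>{e\<in>M. exp_high p e = g}. c e * monom_eval us (exp_low p e) * monom_eval vs (exp_high p e)) =
       mpoly_eval (exp_low p ` {e\<in>M. exp_high p e = g}) (\<lambda>b. c (exp_join p b g)) us * monom_eval vs g"
      by (simp add: sum_distrib_right)
  qed
  finally show ?thesis .
qed


definition exp_unary :: "nat \<Rightarrow> nat \<Rightarrow> nat" where
  "exp_unary i = (\<lambda>j. if j = 0 then i else 0)"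

lemma monom_eval_snoc_exp_join:
  assumes "\<forall>j\<ge>length xs. b j = 0"
  shows "monom_eval (xs @ [a]) (exp_join (length xs) b (exp_unary i)) = monom_eval xs b * a ^ i"
  using assms by (simp add: monom_eval_append exp_low_join monom_eval_single exp_unary_def)

lemma mpoly_eval_snoc_of_sum:
  assumes "finite D" "\<forall>i\<in>D. finite (F i) \<and> (\<forall>b\<in>F i. \<forall>j\<ge>length xs. b j = 0)"
  obtains M c where "finite M" "\<forall>e\<in>M. \<forall>j\<ge>length (xs @ [a]). e j = 0"
    "\<forall>e\<in>M. \<exists>i\<in>D. \<exists>b\<in>F i. c e = d i b" "(\<exists>i\<in>D. F i \<noteq> {}) \<longrightarrow> M \<noteq> {}"
    "mpoly_eval M c (xs @ [a]) = (\<Sum>i\<in>D. mpoly_eval (F i) (d i) xs * a ^ i)"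
proof -
  define p where "p = length xs"
  define emb where "emb i b = exp_join p b (exp_unary i)" for i b
  define M where "M = (\<Union>i\<in>D. emb i ` F i)"
  define c where "c e = d (e p) (exp_low p e)" for e
  have emb_p: "emb i b p = i" for i b by (simp add: emb_def exp_join_def exp_unary_def)
  have low_emb: "exp_low p (emb i b) = b" if "i \<in> D" "b \<in> F i" for i b
    using assms(2) that by (simp add: emb_def exp_low_join p_def)
  have monom_emb: "monom_eval (xs @ [a]) (emb i b) = monom_eval xs b * a ^ i" if "i \<in> D" "b \<in> F i" for i b
    using monom_eval_snoc_exp_join[of xs b a i] assms(2) that by (simp add: emb_def p_def)
  have inj: "inj_on (emb i) (F i)" if "i \<in> D" for i
    by (rule inj_onI) (metis low_emb that)
  have disj: "\<forall>i\<in>D. \<forall>j\<in>D. i \<noteq> j \<longrightarrow> emb i ` F i \<inter> emb j ` F j = {}"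
    by (auto dest: arg_cong[where f = "\<lambda>e. e p"] simp: emb_p)
  show thesis
  proof
    show "finite M" using assms by (auto simp: M_def)
    show "\<forall>e\<in>M. \<forall>j\<ge>length (xs @ [a]). e j = 0"
      by (auto simp: M_def emb_def exp_join_def exp_unary_def p_def)
    show "\<forall>e\<in>M. \<exists>i\<in>D. \<exists>b\<in>F i. c e = d i b"
      by (auto simp: M_def c_def emb_p low_emb)
    show "(\<exists>i\<in>D. F i \<noteq> {}) \<longrightarrow> M \<noteq> {}" by (auto simp: M_def)
    have "mpoly_eval M c (xs @ [a]) = (\<Sum>i\<in>D. \<Sum>e\<in>emb i ` F i. c e * monom_eval (xs @ [a]) e)"
      unfolding mpoly_eval_eq_sum_monom M_def using assms disj by (subst sum.UNION_disjoint) auto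
    also have "\<dots> = (\<Sum>i\<in>D. \<Sum>b\<in>F i. d i b * monom_eval xs b * a ^ i)"
    proof (rule sum.cong[OF refl])
      fix i assume i: "i \<in> D"
      have "(\<Sum>e\<in>emb i ` F i. c e * monom_eval (xs @ [a]) e) =
          (\<Sum>b\<in>F i. c (emb i b) * monom_eval (xs @ [a]) (emb i b))"
        by (rule sum.reindex[OF inj[OF i], unfolded comp_def])
      also have "\<dots> = (\<Sum>b\<in>F i. d i b * monom_eval xs b * a ^ i)"
        using i by (intro sum.cong refl) (simp add: c_def emb_p low_emb monom_emb mult.assoc)
      finally show "(\<Sum>e\<in>emb i ` F i. c e * monom_eval (xs @ [a]) e) = (\<Sum>b\<in>F i. d i b * monom_eval xs b * a ^ i)" .
    qed
    finally show "mpoly_eval M c (xs @ [a]) = (\<Sum>i\<in>D. mpoly_eval (F i) (d i) xs * a ^ i)"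
      by (simp add: mpoly_eval_eq_sum_monom sum_distrib_right)
  qed
qed

lemma mpoly_eval_append_as_sum:
  assumes "finite M" "\<forall>e\<in>M. \<forall>j\<ge>length (us @ vs). e j = 0"
  obtains G F d where "finite G" "G = {} \<longleftrightarrow> M = {}" "\<forall>g\<in>G. \<forall>j\<ge>length vs. g j = 0"
    "\<forall>g\<in>G. finite (F g) \<and> F g \<noteq> {} \<and> (\<forall>b\<in>F g. \<forall>j\<ge>length us. b j = 0) \<and> (\<forall>b\<in>F g. d g b \<in> c ` M)"
    "mpoly_eval M c (us @ vs) = (\<Sum>g\<in>G. mpoly_eval (F g) (d g) us * monom_eval vs g)"
proof
  define p where "p = length us"
  show "finite (exp_high p ` M)" "exp_high p ` M = {} \<longleftrightarrow> M = {}" using assms(1) by auto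
  show "\<forall>g\<in>exp_high p ` M. \<forall>j\<ge>length vs. g j = 0"
    using assms(2) by (auto simp: exp_high_def p_def)
  show "\<forall>g\<in>exp_high p ` M. finite (exp_low p ` {e\<in>M. exp_high p e = g}) \<and> exp_low p ` {e\<in>M. exp_high p e = g} \<noteq> {} \<and>
      (\<forall>b\<in>exp_low p ` {e\<in>M. exp_high p e = g}. \<forall>j\<ge>length us. b j = 0) \<and>
      (\<forall>b\<in>exp_low p ` {e\<in>M. exp_high p e = g}. c (exp_join p b g) \<in> c ` M)"
  proof
    fix g assume "g \<in> exp_high p ` M"
    then obtain e0 where e0: "e0 \<in> M" "exp_high p e0 = g" by blast
    let ?F = "exp_low p ` {e\<in>M. exp_high p e = g}"
    have "finite ?F" "?F \<noteq> {}" using assms(1) e0 by auto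
    moreover have "\<forall>b\<in>?F. \<forall>j\<ge>length us. b j = 0" by (auto simp: exp_low_def p_def)
    moreover have "\<forall>b\<in>?F. c (exp_join p b g) \<in> c ` M" by auto
    ultimately show "finite ?F \<and> ?F \<noteq> {} \<and> (\<forall>b\<in>?F. \<forall>j\<ge>length us. b j = 0) \<and>
        (\<forall>b\<in>?F. c (exp_join p b g) \<in> c ` M)" by blast
  qed
  show "mpoly_eval M c (us @ vs) = (\<Sum>g\<in>exp_high p ` M.
      mpoly_eval (exp_low p ` {e\<in>M. exp_high p e = g}) (\<lambda>b. c (exp_join p b g)) us * monom_eval vs g)"
    unfolding p_def by (rule mpoly_eval_append_blocks[OF assms(1)])
qed

lemma mpoly_eval_snoc_as_sum:
  assumes "finite M" "M \<noteq> {}" "\<forall>e\<in>M. \<forall>j\<ge>length (xs @ [a]). e j = 0"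
  obtains D F d where "finite D" "D \<noteq> {}"
    "\<forall>i\<in>D. finite (F i) \<and> F i \<noteq> {} \<and> (\<forall>b\<in>F i. \<forall>j\<ge>length xs. b j = 0) \<and> (\<forall>b\<in>F i. d i b \<in> c ` M)"
    "mpoly_eval M c (xs @ [a]) = (\<Sum>i\<in>D. mpoly_eval (F i) (d i) xs * a ^ i)"
proof -
  obtain G F d where G: "finite G" "G = {} \<longleftrightarrow> M = {}" "\<forall>g\<in>G. \<forall>j\<ge>length [a]. g j = 0"
    "\<forall>g\<in>G. finite (F g) \<and> F g \<noteq> {} \<and> (\<forall>b\<in>F g. \<forall>j\<ge>length xs. b j = 0) \<and> (\<forall>b\<in>F g. d g b \<in> c ` M)"
    "mpoly_eval M c (xs @ [a]) = (\<Sum>g\<in>G. mpoly_eval (F g) (d g) xs * monom_eval [a] g)"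
    by (rule mpoly_eval_append_as_sum[OF assms(1,3)])
  have G_unary: "exp_unary (g 0) = g" if "g \<in> G" for g
  proof
    fix j show "exp_unary (g 0) j = g j"
      using that G(3) by (cases "j = 0") (auto simp: exp_unary_def)
  qed
  have inj0: "inj_on (\<lambda>g. g 0) G" by (rule inj_onI) (metis G_unary)
  show thesis
  proof
    show "finite ((\<lambda>g. g 0) ` G)" "(\<lambda>g. g 0) ` G \<noteq> {}" using G(1,2) assms(2) by auto
    show "\<forall>i\<in>(\<lambda>g. g 0) ` G. finite (F (exp_unary i)) \<and> F (exp_unary i) \<noteq> {} \<and>
        (\<forall>b\<in>F (exp_unary i). \<forall>j\<ge>length xs. b j = 0) \<and> (\<forall>b\<in>F (exp_unary i). d (exp_unary i) b \<in> c ` M)"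
      using G(4) G_unary by auto
    show "mpoly_eval M c (xs @ [a]) =
        (\<Sum>i\<in>(\<lambda>g. g 0) ` G. mpoly_eval (F (exp_unary i)) (d (exp_unary i)) xs * a ^ i)"
      unfolding G(5) sum.reindex[OF inj0] comp_def monom_eval_single
      by (rule sum.cong[OF refl]) (simp add: G_unary)
  qed
qed


definition is_subring :: "'a::field set \<Rightarrow> bool" where
  "is_subring S \<longleftrightarrow> 0 \<in> S \<and> 1 \<in> S \<and> (\<forall>x\<in>S. \<forall>y\<in>S. x + y \<in> S \<and> x * y \<in> S) \<and> (\<forall>x\<in>S. - x \<in> S)"

definition is_ideal :: "'a::field set \<Rightarrow> 'a set \<Rightarrow> bool" where
  "is_ideal A I \<longleftrightarrow> 0 \<in> I \<and> I \<subseteq> A \<and> (\<forall>x\<in>I. \<forall>y\<in>I. x + y \<in> I) \<and> (\<forall>x\<in>I. - x \<in> I) \<and>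
     (\<forall>x\<in>I. \<forall>a\<in>A. a * x \<in> I)"

lemma is_subring_subfield: "is_subfield k \<Longrightarrow> is_subring k"
  unfolding is_subfield_def is_subring_def by blast

lemma is_subring_Int: "is_subring A \<Longrightarrow> is_subring B \<Longrightarrow> is_subring (A \<inter> B)"
  unfolding is_subring_def by blast

lemma is_subring_UNIV: "is_subring UNIV"
  by (simp add: is_subring_def)

lemma is_ideal_zero: "is_ideal UNIV {0}"
  by (simp add: is_ideal_def)

lemma is_subring_sum:
  assumes "is_subring S" "finite D" "\<And>i. i \<in> D \<Longrightarrow> f i \<in> S"
  shows "sum f D \<in> S"
  using assms(2,3) by (induction D rule: finite_induct) (use assms(1) in \<open>auto simp: is_subring_def\<close>)

lemma is_subring_prod:
  assumes "is_subring S" "finite D" "\<And>i. i \<in> D \<Longrightarrow> f i \<in> S"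
  shows "prod f D \<in> S"
  using assms(2,3) by (induction D rule: finite_induct) (use assms(1) in \<open>auto simp: is_subring_def\<close>)

lemma is_subring_power: "is_subring S \<Longrightarrow> x \<in> S \<Longrightarrow> x ^ n \<in> S"
  by (induction n) (auto simp: is_subring_def)

lemma is_subring_monom_eval: "is_subring S \<Longrightarrow> set xs \<subseteq> S \<Longrightarrow> monom_eval xs e \<in> S"
  unfolding monom_eval_def by (rule is_subring_prod) (auto intro!: is_subring_power)

lemma is_subring_mpoly_eval:
  "is_subring S \<Longrightarrow> finite M \<Longrightarrow> (\<And>e. e \<in> M \<Longrightarrow> c e \<in> S) \<Longrightarrow> set xs \<subseteq> S \<Longrightarrow> mpoly_eval M c xs \<in> S"
  unfolding mpoly_eval_eq_sum_monom
  by (rule is_subring_sum) (auto simp: is_subring_def is_subring_monom_eval)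

lemma is_ideal_sum:
  assumes "is_ideal A I" "finite D" "\<And>i. i \<in> D \<Longrightarrow> f i \<in> I"
  shows "sum f D \<in> I"
  using assms(2,3) by (induction D rule: finite_induct) (use assms(1) in \<open>auto simp: is_ideal_def\<close>)

lemma is_ideal_mult: "is_ideal A I \<Longrightarrow> x \<in> I \<Longrightarrow> a \<in> A \<Longrightarrow> x * a \<in> I"
  by (auto simp: is_ideal_def mult.commute)

lemma is_ideal_diff: "is_ideal A I \<Longrightarrow> x \<in> I \<Longrightarrow> y \<in> I \<Longrightarrow> x - y \<in> I"
  unfolding is_ideal_def by (metis diff_conv_add_uminus)

lemma is_ideal_add_notin: "is_ideal A I \<Longrightarrow> x \<notin> I \<Longrightarrow> y \<in> I \<Longrightarrow> x + y \<notin> I"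
  by (metis add_diff_cancel_right' is_ideal_diff)

lemma mpoly_eval_drop_ideal_coeffs:
  assumes "is_subring A" "is_ideal A I" "B \<subseteq> A" "set xs \<subseteq> A" "finite M" "\<forall>e\<in>M. c e \<in> B"
  shows "mpoly_eval M c xs - mpoly_eval {e\<in>M. c e \<notin> I} c xs \<in> I"
proof -
  have "mpoly_eval M c xs = (\<Sum>e\<in>M \<inter> {e. c e \<notin> I}. c e * monom_eval xs e) +
      (\<Sum>e\<in>M - {e. c e \<notin> I}. c e * monom_eval xs e)"
    unfolding mpoly_eval_eq_sum_monom by (rule sum.Int_Diff[OF assms(5)])
  moreover have "M \<inter> {e. c e \<notin> I} = {e\<in>M. c e \<notin> I}" by auto
  moreover have "(\<Sum>e\<in>M - {e. c e \<notin> I}. c e * monom_eval xs e) \<in> I"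
  proof (rule is_ideal_sum[OF assms(2)])
    fix e assume "e \<in> M - {e. c e \<notin> I}"
    then show "c e * monom_eval xs e \<in> I"
      using is_ideal_mult[OF assms(2)] is_subring_monom_eval[OF assms(1,4)] by simp
  qed (use assms(5) in simp)
  ultimately show ?thesis by (simp add: mpoly_eval_eq_sum_monom)
qed


definition adjoin :: "'a::field set \<Rightarrow> 'a list \<Rightarrow> 'a set" where
  "adjoin B xs = {mpoly_eval M c xs | M c.
     finite M \<and> (\<forall>e\<in>M. \<forall>i\<ge>length xs. e i = 0) \<and> (\<forall>e\<in>M. c e \<in> B)}"

lemma adjoinI:
  "finite M \<Longrightarrow> \<forall>e\<in>M. \<forall>i\<ge>length xs. e i = 0 \<Longrightarrow> \<forall>e\<in>M. c e \<in> B \<Longrightarrow> mpoly_eval M c xs \<in> adjoin B xs"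
  unfolding adjoin_def by blast

lemma adjoinE:
  assumes "x \<in> adjoin B xs"
  obtains M c where "x = mpoly_eval M c xs" "finite M" "\<forall>e\<in>M. \<forall>i\<ge>length xs. e i = 0" "\<forall>e\<in>M. c e \<in> B"
  using assms unfolding adjoin_def by blast

lemma adjoin_least: "is_subring S \<Longrightarrow> B \<subseteq> S \<Longrightarrow> set xs \<subseteq> S \<Longrightarrow> adjoin B xs \<subseteq> S"
  unfolding adjoin_def by (auto intro!: is_subring_mpoly_eval)

lemma const_in_adjoin: "b \<in> B \<Longrightarrow> b \<in> adjoin B xs"
  using adjoinI[of "{\<lambda>_. 0}" xs "\<lambda>_. b"] by (simp add: mpoly_eval_eq_sum_monom)

lemma set_subset_adjoin:
  assumes "1 \<in> B"
  shows "set xs \<subseteq> adjoin B xs"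
proof
  fix x assume "x \<in> set xs"
  then obtain j where j: "j < length xs" "x = xs ! j" by (metis in_set_conv_nth)
  define e where "e = (\<lambda>i. if i = j then 1 else (0::nat))"
  have "monom_eval xs e = (\<Prod>i<length xs. if i = j then xs ! j else 1)"
    unfolding monom_eval_def e_def by (rule prod.cong) auto
  also have "\<dots> = x" using j by (subst prod.delta) auto
  finally have "mpoly_eval {e} (\<lambda>_. 1) xs = x" by (simp add: mpoly_eval_eq_sum_monom)
  moreover have "\<forall>e'\<in>{e}. \<forall>i\<ge>length xs. e' i = 0" using j(1) by (simp add: e_def)
  ultimately show "x \<in> adjoin B xs"
    using adjoinI[of "{e}" xs "\<lambda>_. 1" B] assms by simp
qed

lemma adjoin_add:
  assumes "is_subring B" "x \<in> adjoin B xs" "y \<in> adjoin B xs"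
  shows "x + y \<in> adjoin B xs"
proof -
  obtain M1 c1 where 1: "x = mpoly_eval M1 c1 xs" "finite M1" "\<forall>e\<in>M1. \<forall>i\<ge>length xs. e i = 0" "\<forall>e\<in>M1. c1 e \<in> B"
    using assms(2) by (rule adjoinE)
  obtain M2 c2 where 2: "y = mpoly_eval M2 c2 xs" "finite M2" "\<forall>e\<in>M2. \<forall>i\<ge>length xs. e i = 0" "\<forall>e\<in>M2. c2 e \<in> B"
    using assms(3) by (rule adjoinE)
  define c where "c e = (if e \<in> M1 then c1 e else 0) + (if e \<in> M2 then c2 e else 0)" for e
  have "mpoly_eval (M1 \<union> M2) c xs = (\<Sum>e\<in>M1 \<union> M2. (if e \<in> M1 then c1 e else 0) * monom_eval xs e) +
      (\<Sum>e\<in>M1 \<union> M2. (if e \<in> M2 then c2 e else 0) * monom_eval xs e)"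
    unfolding mpoly_eval_eq_sum_monom c_def by (simp add: distrib_right sum.distrib)
  also have "(\<Sum>e\<in>M1 \<union> M2. (if e \<in> M1 then c1 e else 0) * monom_eval xs e) = x"
    unfolding 1 mpoly_eval_eq_sum_monom using 1(2) 2(2)
    by (subst sum.mono_neutral_cong_right[of "M1 \<union> M2" M1]) auto
  also have "(\<Sum>e\<in>M1 \<union> M2. (if e \<in> M2 then c2 e else 0) * monom_eval xs e) = y"
    unfolding 2 mpoly_eval_eq_sum_monom using 1(2) 2(2)
    by (subst sum.mono_neutral_cong_right[of "M1 \<union> M2" M2]) auto
  finally have "x + y = mpoly_eval (M1 \<union> M2) c xs" ..
  moreover have "\<forall>e\<in>M1 \<union> M2. c e \<in> B" using 1(4) 2(4) assms(1) by (auto simp: c_def is_subring_def)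
  moreover have "\<forall>e\<in>M1 \<union> M2. \<forall>i\<ge>length xs. e i = 0" using 1(3) 2(3) by blast
  ultimately show ?thesis using 1(2) 2(2) adjoinI[of "M1 \<union> M2" xs c B] by simp
qed

lemma adjoin_uminus:
  assumes "is_subring B" "x \<in> adjoin B xs"
  shows "- x \<in> adjoin B xs"
proof -
  obtain M c where Mc: "x = mpoly_eval M c xs" "finite M" "\<forall>e\<in>M. \<forall>i\<ge>length xs. e i = 0" "\<forall>e\<in>M. c e \<in> B"
    using assms(2) by (rule adjoinE)
  have "- x = mpoly_eval M (\<lambda>e. - c e) xs" unfolding Mc mpoly_eval_eq_sum_monom by (simp add: sum_negf)
  moreover have "\<forall>e\<in>M. - c e \<in> B" using Mc(4) assms(1) by (simp add: is_subring_def)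
  ultimately show ?thesis using adjoinI[OF Mc(2,3)] by simp
qed

lemma adjoin_mult:
  assumes "is_subring B" "x \<in> adjoin B xs" "y \<in> adjoin B xs"
  shows "x * y \<in> adjoin B xs"
proof -
  obtain M1 c1 where 1: "x = mpoly_eval M1 c1 xs" "finite M1" "\<forall>e\<in>M1. \<forall>i\<ge>length xs. e i = 0" "\<forall>e\<in>M1. c1 e \<in> B"
    using assms(2) by (rule adjoinE)
  obtain M2 c2 where 2: "y = mpoly_eval M2 c2 xs" "finite M2" "\<forall>e\<in>M2. \<forall>i\<ge>length xs. e i = 0" "\<forall>e\<in>M2. c2 e \<in> B"
    using assms(3) by (rule adjoinE)
  define pl where "pl = (\<lambda>(e1::nat\<Rightarrow>nat, e2::nat\<Rightarrow>nat). (\<lambda>i. e1 i + e2 i))"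
  define M where "M = pl ` (M1 \<times> M2)"
  define c where "c e = (\<Sum>q\<in>{q\<in>M1 \<times> M2. pl q = e}. c1 (fst q) * c2 (snd q))" for e
  have fin: "finite M" using 1(2) 2(2) by (simp add: M_def)
  have "x * y = (\<Sum>q\<in>M1 \<times> M2. (c1 (fst q) * monom_eval xs (fst q)) * (c2 (snd q) * monom_eval xs (snd q)))"
    unfolding 1 2 mpoly_eval_eq_sum_monom sum_product sum.cartesian_product by (simp add: case_prod_beta)
  also have "\<dots> = (\<Sum>q\<in>M1 \<times> M2. c1 (fst q) * c2 (snd q) * monom_eval xs (pl q))"
    by (rule sum.cong) (auto simp: pl_def monom_eval_add_exp mult_ac)
  also have "\<dots> = (\<Sum>e\<in>M. \<Sum>q\<in>{q\<in>M1 \<times> M2. pl q = e}. c1 (fst q) * c2 (snd q) * monom_eval xs (pl q))"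
    by (rule sum.group[symmetric]) (use 1(2) 2(2) fin in \<open>auto simp: M_def\<close>)
  also have "\<dots> = mpoly_eval M c xs"
    unfolding mpoly_eval_eq_sum_monom c_def sum_distrib_right by (intro sum.cong refl) auto
  finally have "x * y = mpoly_eval M c xs" .
  moreover have "\<forall>e\<in>M. \<forall>i\<ge>length xs. e i = 0" using 1(3) 2(3) by (auto simp: M_def pl_def)
  moreover have "\<forall>e\<in>M. c e \<in> B"
    unfolding c_def using assms(1) 1(2) 2(2) 1(4) 2(4)
    by (auto intro!: is_subring_sum simp: is_subring_def)
  ultimately show ?thesis using adjoinI[OF fin] by simp
qed

lemma is_subring_adjoin: "is_subring B \<Longrightarrow> is_subring (adjoin B xs)"
proof -
  assume B: "is_subring B"
  then have "0 \<in> B" "1 \<in> B" by (auto simp: is_subring_def)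
  then show ?thesis unfolding is_subring_def[of "adjoin B xs"]
    using adjoin_add[OF B] adjoin_mult[OF B] adjoin_uminus[OF B] const_in_adjoin by blast
qed

lemma subset_adjoin: "B \<subseteq> adjoin B xs"
  using const_in_adjoin by blast

lemma adjoin_mono_set:
  assumes "is_subring B" "set xs \<subseteq> set ys"
  shows "adjoin B xs \<subseteq> adjoin B ys"
proof (rule adjoin_least)
  show "is_subring (adjoin B ys)" by (rule is_subring_adjoin[OF assms(1)])
  show "B \<subseteq> adjoin B ys" by (rule subset_adjoin)
  have "1 \<in> B" using assms(1) by (simp add: is_subring_def)
  then show "set xs \<subseteq> adjoin B ys" using assms(2) set_subset_adjoin[of B ys] by blast
qed


section \<open>Independence modulo an ideal\<close>

text \<open>Coefficients are taken from \<open>B - I\<close>, not just \<open>B - {0}\<close> as in \<open>alg_indep_mod\<close>, so that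
  \<open>B\<close> need not meet \<open>I\<close> trivially.\<close>

definition indep_mod :: "'a::field set \<Rightarrow> 'a set \<Rightarrow> 'a list \<Rightarrow> bool" where
  "indep_mod B I xs \<longleftrightarrow> (\<forall>M c. finite M \<and> M \<noteq> {} \<and> (\<forall>e\<in>M. \<forall>i\<ge>length xs. e i = 0) \<and>
       (\<forall>e\<in>M. c e \<in> B \<and> c e \<notin> I) \<longrightarrow> mpoly_eval M c xs \<notin> I)"

definition algebraic_mod :: "'a::field set \<Rightarrow> 'a set \<Rightarrow> 'a \<Rightarrow> bool" where
  "algebraic_mod I B a \<longleftrightarrow>
     (\<exists>D c. finite D \<and> (\<forall>i\<in>D. c i \<in> B) \<and> (\<exists>i\<in>D. c i \<notin> I) \<and> (\<Sum>i\<in>D. c i * a ^ i) \<in> I)"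

lemma alg_indep_mod_iff_indep_mod:
  assumes "\<forall>x\<in>B. x \<in> I \<longleftrightarrow> x = 0"
  shows "alg_indep_mod B I xs \<longleftrightarrow> indep_mod B I xs"
proof -
  have coeffs: "\<And>c M. (\<forall>e\<in>M. c e \<in> B \<and> c e \<noteq> 0) = (\<forall>e\<in>M. c e \<in> B \<and> c e \<notin> I)"
    using assms by blast
  show ?thesis unfolding alg_indep_mod_def indep_mod_def by (simp only: coeffs)
qed

lemma indep_modE:
  "indep_mod B I xs \<Longrightarrow> finite M \<Longrightarrow> M \<noteq> {} \<Longrightarrow> \<forall>e\<in>M. \<forall>i\<ge>length xs. e i = 0 \<Longrightarrow>
   \<forall>e\<in>M. c e \<in> B \<and> c e \<notin> I \<Longrightarrow> mpoly_eval M c xs \<notin> I"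
  unfolding indep_mod_def by blast

lemma algebraic_modI:
  "finite D \<Longrightarrow> \<forall>i\<in>D. c i \<in> B \<Longrightarrow> i0 \<in> D \<Longrightarrow> c i0 \<notin> I \<Longrightarrow> (\<Sum>i\<in>D. c i * a ^ i) \<in> I \<Longrightarrow>
   algebraic_mod I B a"
  unfolding algebraic_mod_def by blast

lemma algebraic_mod_mono: "B \<subseteq> B' \<Longrightarrow> algebraic_mod I B a \<Longrightarrow> algebraic_mod I B' a"
  unfolding algebraic_mod_def by blast

lemma indep_mod_Nil: "indep_mod B I []"
proof (unfold indep_mod_def, intro allI impI)
  fix M :: "(nat \<Rightarrow> nat) set" and c
  assume H: "finite M \<and> M \<noteq> {} \<and> (\<forall>e\<in>M. \<forall>i\<ge>length ([]::'a list). e i = 0) \<and> (\<forall>e\<in>M. c e \<in> B \<and> c e \<notin> I)"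
  then obtain e0 where e0: "e0 \<in> M" by blast
  have zero: "\<forall>e\<in>M. e = (\<lambda>_. 0)" using H by (auto intro!: ext)
  have "M = {\<lambda>_. 0}"
  proof (intro equalityI subsetI)
    fix e :: "nat \<Rightarrow> nat" assume "e \<in> {\<lambda>_. 0}"
    then show "e \<in> M" using e0 zero by auto
  qed (use zero in auto)
  then show "mpoly_eval M c ([]::'a list) \<notin> I" using H by (simp add: mpoly_eval_eq_sum_monom)
qed

lemma indep_mod_appendD:
  assumes "indep_mod B I (xs @ ys)"
  shows "indep_mod B I xs"
proof (unfold indep_mod_def, intro allI impI)
  fix M :: "(nat \<Rightarrow> nat) set" and c
  assume H: "finite M \<and> M \<noteq> {} \<and> (\<forall>e\<in>M. \<forall>i\<ge>length xs. e i = 0) \<and> (\<forall>e\<in>M. c e \<in> B \<and> c e \<notin> I)"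
  then have "mpoly_eval M c (xs @ ys) \<notin> I" using assms unfolding indep_mod_def by auto
  with H show "mpoly_eval M c xs \<notin> I" using mpoly_eval_append_supported[of M xs c ys] by simp
qed

lemma monom_eval_permute_list:
  assumes q: "q permutes {..<length xs}"
  shows "monom_eval (permute_list q xs) e = monom_eval xs (\<lambda>j. if j < length xs then e (inv_into UNIV q j) else 0)"
proof -
  define n where "n = length xs"
  have "monom_eval (permute_list q xs) e = (\<Prod>i<n. xs ! q i ^ e i)"
    unfolding monom_eval_def n_def by (rule prod.cong) (auto simp: permute_list_nth[OF q])
  also have "\<dots> = (\<Prod>i<n. (\<lambda>j. xs ! j ^ e (inv_into UNIV q j)) (q i))"
    using permutes_inverses(2)[OF q] by simp
  also have "\<dots> = (\<Prod>j<n. xs ! j ^ e (inv_into UNIV q j))"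
    using prod.permute[OF q[folded n_def], of "\<lambda>j. xs ! j ^ e (inv_into UNIV q j)"] by (simp add: comp_def)
  also have "\<dots> = monom_eval xs (\<lambda>j. if j < length xs then e (inv_into UNIV q j) else 0)"
    unfolding monom_eval_def n_def by (rule prod.cong) auto
  finally show ?thesis .
qed

lemma indep_mod_perm:
  assumes indep: "indep_mod B I xs" and ms: "mset ys = mset xs"
  shows "indep_mod B I ys"
proof -
  obtain q where q: "q permutes {..<length xs}" "permute_list q xs = ys"
    using mset_eq_permutation[OF ms] by blast
  define n where "n = length xs"
  have len: "length ys = n" using q(2)[symmetric] by (simp add: n_def)
  define f where "f e = (\<lambda>j. if j < n then e (inv_into UNIV q j) else 0)" for e :: "nat \<Rightarrow> nat"
  have monom_f: "monom_eval ys e = monom_eval xs (f e)" for e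
    using monom_eval_permute_list[OF q(1)] q(2) by (simp add: f_def n_def)
  show ?thesis unfolding indep_mod_def
  proof (intro allI impI)
    fix M :: "(nat \<Rightarrow> nat) set" and c
    assume H: "finite M \<and> M \<noteq> {} \<and> (\<forall>e\<in>M. \<forall>i\<ge>length ys. e i = 0) \<and> (\<forall>e\<in>M. c e \<in> B \<and> c e \<notin> I)"
    have inj: "inj_on f M"
    proof (rule inj_onI, rule ext)
      fix e1 e2 i assume e: "e1 \<in> M" "e2 \<in> M" "f e1 = f e2"
      show "e1 i = e2 i"
      proof (cases "i < n")
        case True
        then have "q i < n" using permutes_in_image[OF q(1)] n_def by auto
        then have "f e1 (q i) = e1 i" "f e2 (q i) = e2 i"
          using permutes_inverses(2)[OF q(1)] by (auto simp: f_def)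
        then show ?thesis using e(3) by metis
      next
        case False
        then have "e1 i = 0" "e2 i = 0" using H e(1,2) len by auto
        then show ?thesis by simp
      qed
    qed
    define c' where "c' e' = c (inv_into M f e')" for e'
    have "mpoly_eval M c ys = (\<Sum>e\<in>M. c' (f e) * monom_eval xs (f e))"
      unfolding mpoly_eval_eq_sum_monom c'_def monom_f using inv_into_f_f[OF inj]
      by (intro sum.cong refl) simp
    also have "\<dots> = mpoly_eval (f ` M) c' xs"
      unfolding mpoly_eval_eq_sum_monom by (rule sum.reindex[OF inj, symmetric, unfolded comp_def])
    finally have "mpoly_eval M c ys = mpoly_eval (f ` M) c' xs" .
    moreover have "mpoly_eval (f ` M) c' xs \<notin> I"
    proof (rule indep_modE[OF indep])
      show "\<forall>e\<in>f ` M. \<forall>i\<ge>length xs. e i = 0" by (auto simp: f_def n_def)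
      show "\<forall>e\<in>f ` M. c' e \<in> B \<and> c' e \<notin> I" using H by (auto simp: c'_def inv_into_f_f[OF inj])
    qed (use H in auto)
    ultimately show "mpoly_eval M c ys \<notin> I" by simp
  qed
qed


lemma adjoin_mod_ideal:
  assumes "is_subring A" "is_ideal A I" "B \<subseteq> A" "set xs \<subseteq> A" "x \<in> adjoin B xs"
  obtains M c where "finite M" "\<forall>e\<in>M. \<forall>j\<ge>length xs. e j = 0" "\<forall>e\<in>M. c e \<in> B \<and> c e \<notin> I"
    "x - mpoly_eval M c xs \<in> I"
proof -
  obtain M c where Mc: "x = mpoly_eval M c xs" "finite M" "\<forall>e\<in>M. \<forall>j\<ge>length xs. e j = 0" "\<forall>e\<in>M. c e \<in> B"
    using assms(5) by (rule adjoinE)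
  show thesis
    by (rule that[of "{e\<in>M. c e \<notin> I}" c])
      (use Mc mpoly_eval_drop_ideal_coeffs[OF assms(1-4) Mc(2,4)] in auto)
qed

lemma adjoin_family_mod_ideal:
  assumes A: "is_subring A" "is_ideal A I" "B \<subseteq> A" "set xs \<subseteq> A" and q: "\<forall>i\<in>D. q i \<in> adjoin B xs"
  obtains F d where "\<forall>i\<in>D. finite (F i) \<and> (\<forall>b\<in>F i. \<forall>j\<ge>length xs. b j = 0) \<and>
      (\<forall>b\<in>F i. d i b \<in> B \<and> d i b \<notin> I) \<and> q i - mpoly_eval (F i) (d i) xs \<in> I"
proof -
  have "\<forall>i\<in>D. \<exists>F d. finite F \<and> (\<forall>b\<in>F. \<forall>j\<ge>length xs. b j = 0) \<and> (\<forall>b\<in>F. d b \<in> B \<and> d b \<notin> I) \<and>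
      q i - mpoly_eval F d xs \<in> I"
  proof
    fix i assume "i \<in> D"
    then have "q i \<in> adjoin B xs" using q by blast
    then obtain F d where "finite F" "\<forall>b\<in>F. \<forall>j\<ge>length xs. b j = 0" "\<forall>b\<in>F. d b \<in> B \<and> d b \<notin> I"
      "q i - mpoly_eval F d xs \<in> I" by (rule adjoin_mod_ideal[OF A(1-4)])
    then show "\<exists>F d. finite F \<and> (\<forall>b\<in>F. \<forall>j\<ge>length xs. b j = 0) \<and> (\<forall>b\<in>F. d b \<in> B \<and> d b \<notin> I) \<and>
      q i - mpoly_eval F d xs \<in> I" by blast
  qed
  then obtain F where "\<forall>i\<in>D. \<exists>d. finite (F i) \<and> (\<forall>b\<in>F i. \<forall>j\<ge>length xs. b j = 0) \<and>
      (\<forall>b\<in>F i. d b \<in> B \<and> d b \<notin> I) \<and> q i - mpoly_eval (F i) d xs \<in> I"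
    by (rule bchoice[THEN exE])
  then obtain d where "\<forall>i\<in>D. finite (F i) \<and> (\<forall>b\<in>F i. \<forall>j\<ge>length xs. b j = 0) \<and>
      (\<forall>b\<in>F i. d i b \<in> B \<and> d i b \<notin> I) \<and> q i - mpoly_eval (F i) (d i) xs \<in> I"
    by (rule bchoice[THEN exE])
  then show thesis by (rule that)
qed

lemma indep_mod_snoc_not_algebraic:
  assumes A: "is_subring A" "is_ideal A I" "B \<subseteq> A" "set xs \<subseteq> A" "a \<in> A"
    and indep: "indep_mod B I (xs @ [a])"
  shows "\<not> algebraic_mod I (adjoin B xs) a"
proof
  assume "algebraic_mod I (adjoin B xs) a"
  then obtain D q where D: "finite D" "\<forall>i\<in>D. q i \<in> adjoin B xs" "\<exists>i\<in>D. q i \<notin> I"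
      "(\<Sum>i\<in>D. q i * a ^ i) \<in> I"
    unfolding algebraic_mod_def by blast
  obtain F d where F: "\<forall>i\<in>D. finite (F i) \<and> (\<forall>b\<in>F i. \<forall>j\<ge>length xs. b j = 0) \<and>
      (\<forall>b\<in>F i. d i b \<in> B \<and> d i b \<notin> I) \<and> q i - mpoly_eval (F i) (d i) xs \<in> I"
    by (rule adjoin_family_mod_ideal[OF A(1-4) D(2)])
  have "\<forall>i\<in>D. finite (F i) \<and> (\<forall>b\<in>F i. \<forall>j\<ge>length xs. b j = 0)" using F by blast
  then obtain M c where M: "finite M" "\<forall>e\<in>M. \<forall>j\<ge>length (xs @ [a]). e j = 0"
    "\<forall>e\<in>M. \<exists>i\<in>D. \<exists>b\<in>F i. c e = d i b" "(\<exists>i\<in>D. F i \<noteq> {}) \<longrightarrow> M \<noteq> {}"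
    "mpoly_eval M c (xs @ [a]) = (\<Sum>i\<in>D. mpoly_eval (F i) (d i) xs * a ^ i)"
    by (rule mpoly_eval_snoc_of_sum[OF D(1), where a = a and d = d])
  have "(\<Sum>i\<in>D. (q i - mpoly_eval (F i) (d i) xs) * a ^ i) \<in> I"
  proof (rule is_ideal_sum[OF A(2) D(1)])
    fix i assume "i \<in> D"
    then show "(q i - mpoly_eval (F i) (d i) xs) * a ^ i \<in> I"
      using F is_ideal_mult[OF A(2)] is_subring_power[OF A(1,5)] by blast
  qed
  moreover have "mpoly_eval M c (xs @ [a]) =
      (\<Sum>i\<in>D. q i * a ^ i) - (\<Sum>i\<in>D. (q i - mpoly_eval (F i) (d i) xs) * a ^ i)"
    by (simp add: M(5) sum_subtractf left_diff_distrib)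
  ultimately have "mpoly_eval M c (xs @ [a]) \<in> I"
    using is_ideal_diff[OF A(2) D(4)] by simp
  moreover have "M \<noteq> {}"
  proof (rule M(4)[rule_format])
    obtain i0 where i0: "i0 \<in> D" "q i0 \<notin> I" using D(3) by blast
    have "F i0 \<noteq> {}"
    proof
      assume "F i0 = {}"
      moreover have "q i0 - mpoly_eval (F i0) (d i0) xs \<in> I" using F i0(1) by blast
      ultimately have "q i0 \<in> I" by (simp add: mpoly_eval_eq_sum_monom)
      with i0(2) show False ..
    qed
    then show "\<exists>i\<in>D. F i \<noteq> {}" using i0 by blast
  qed
  moreover have "\<forall>e\<in>M. c e \<in> B \<and> c e \<notin> I"
  proof
    fix e assume "e \<in> M"
    then obtain i b where "i \<in> D" "b \<in> F i" "c e = d i b" using M(3) by blast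
    then show "c e \<in> B \<and> c e \<notin> I" using F by simp
  qed
  ultimately show False using indep_modE[OF indep M(1) _ M(2)] by blast
qed

lemma indep_mod_snocI:
  assumes indep: "indep_mod B I xs" and not_alg: "\<not> algebraic_mod I (adjoin B xs) a"
  shows "indep_mod B I (xs @ [a])"
proof (unfold indep_mod_def, intro allI impI notI)
  fix M :: "(nat \<Rightarrow> nat) set" and c
  assume H: "finite M \<and> M \<noteq> {} \<and> (\<forall>e\<in>M. \<forall>i\<ge>length (xs @ [a]). e i = 0) \<and> (\<forall>e\<in>M. c e \<in> B \<and> c e \<notin> I)"
    and in_I: "mpoly_eval M c (xs @ [a]) \<in> I"
  have "finite M" "M \<noteq> {}" "\<forall>e\<in>M. \<forall>i\<ge>length (xs @ [a]). e i = 0" using H by blast+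
  then obtain D F d where D: "finite D" "D \<noteq> {}"
    "\<forall>i\<in>D. finite (F i) \<and> F i \<noteq> {} \<and> (\<forall>b\<in>F i. \<forall>j\<ge>length xs. b j = 0) \<and> (\<forall>b\<in>F i. d i b \<in> c ` M)"
    "mpoly_eval M c (xs @ [a]) = (\<Sum>i\<in>D. mpoly_eval (F i) (d i) xs * a ^ i)"
    by (rule mpoly_eval_snoc_as_sum)
  have F: "finite (F i)" "F i \<noteq> {}" "\<forall>b\<in>F i. \<forall>j\<ge>length xs. b j = 0" "\<forall>b\<in>F i. d i b \<in> B \<and> d i b \<notin> I"
    if "i \<in> D" for i
  proof -
    have "c ` M \<subseteq> {x. x \<in> B \<and> x \<notin> I}" using H by blast
    moreover have "finite (F i) \<and> F i \<noteq> {} \<and> (\<forall>b\<in>F i. \<forall>j\<ge>length xs. b j = 0) \<and> (\<forall>b\<in>F i. d i b \<in> c ` M)"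
      using D(3) that by blast
    ultimately show "finite (F i)" "F i \<noteq> {}" "\<forall>b\<in>F i. \<forall>j\<ge>length xs. b j = 0"
      "\<forall>b\<in>F i. d i b \<in> B \<and> d i b \<notin> I"
      by blast+
  qed
  have "\<forall>i\<in>D. mpoly_eval (F i) (d i) xs \<in> adjoin B xs" using F by (simp add: adjoinI)
  moreover have "\<forall>i\<in>D. mpoly_eval (F i) (d i) xs \<notin> I" using F by (simp add: indep_modE[OF indep])
  moreover have "(\<Sum>i\<in>D. mpoly_eval (F i) (d i) xs * a ^ i) \<in> I" using D(4) in_I by simp
  moreover obtain i0 where "i0 \<in> D" using D(2) by blast
  ultimately have "algebraic_mod I (adjoin B xs) a"
    using algebraic_modI[OF D(1), of "\<lambda>i. mpoly_eval (F i) (d i) xs"] by blast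
  with not_alg show False ..
qed

lemma indep_zero_append:
  assumes K': "is_subfield K'" "k \<subseteq> K'" "set zs \<subseteq> K'"
    and zs: "indep_mod k {0} zs" and ys: "indep_mod K' {0} ys"
  shows "indep_mod k {0} (zs @ ys)"
proof (unfold indep_mod_def, intro allI impI notI)
  fix M :: "(nat \<Rightarrow> nat) set" and c
  assume H: "finite M \<and> M \<noteq> {} \<and> (\<forall>e\<in>M. \<forall>i\<ge>length (zs @ ys). e i = 0) \<and> (\<forall>e\<in>M. c e \<in> k \<and> c e \<notin> {0})"
    and zero: "mpoly_eval M c (zs @ ys) \<in> {0}"
  have "finite M" "\<forall>e\<in>M. \<forall>i\<ge>length (zs @ ys). e i = 0" using H by blast+
  then obtain G F d where G: "finite G" "G = {} \<longleftrightarrow> M = {}" "\<forall>g\<in>G. \<forall>j\<ge>length ys. g j = 0"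
    "\<forall>g\<in>G. finite (F g) \<and> F g \<noteq> {} \<and> (\<forall>b\<in>F g. \<forall>j\<ge>length zs. b j = 0) \<and> (\<forall>b\<in>F g. d g b \<in> c ` M)"
    "mpoly_eval M c (zs @ ys) = (\<Sum>g\<in>G. mpoly_eval (F g) (d g) zs * monom_eval ys g)"
    by (rule mpoly_eval_append_as_sum[where us = zs and vs = ys and c = c])
  define Q where "Q g = mpoly_eval (F g) (d g) zs" for g
  have cM: "c ` M \<subseteq> {x. x \<in> k \<and> x \<notin> {0}}" using H by auto
  have Q: "Q g \<in> K' \<and> Q g \<notin> {0}" if "g \<in> G" for g
  proof
    have Fg: "finite (F g)" "F g \<noteq> {}" "\<forall>b\<in>F g. \<forall>j\<ge>length zs. b j = 0" "\<forall>b\<in>F g. d g b \<in> c ` M"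
      using G(4) that by blast+
    then have coeffs: "\<forall>b\<in>F g. d g b \<in> k \<and> d g b \<notin> {0}" using cM by blast
    have "Q g \<in> adjoin k zs" unfolding Q_def using adjoinI[OF Fg(1,3)] coeffs by blast
    then show "Q g \<in> K'" using adjoin_least[OF is_subring_subfield[OF K'(1)] K'(2,3)] by blast
    show "Q g \<notin> {0}" unfolding Q_def using indep_modE[OF zs Fg(1,2,3)] coeffs by blast
  qed
  have "G \<noteq> {}" using G(2) H by blast
  then have "mpoly_eval G Q ys \<notin> {0}" using indep_modE[OF ys G(1) _ G(3)] Q by blast
  moreover have "mpoly_eval G Q ys = mpoly_eval M c (zs @ ys)"
    unfolding G(5) by (simp add: Q_def mpoly_eval_eq_sum_monom)
  ultimately show False using zero by simp
qed

lemma has_trdeg_length_le: "has_trdeg k A I d \<Longrightarrow> set xs \<subseteq> A \<Longrightarrow> alg_indep_mod k I xs \<Longrightarrow> length xs \<le> d"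
  unfolding has_trdeg_def by blast

lemma has_trdegE:
  assumes "has_trdeg k A I d"
  obtains xs where "set xs \<subseteq> A" "length xs = d" "alg_indep_mod k I xs"
  using assms unfolding has_trdeg_def by blast

lemma alg_indep_mod_Int:
  assumes "is_subring S" "k \<subseteq> S" "set xs \<subseteq> S"
  shows "alg_indep_mod k (S \<inter> I) xs \<longleftrightarrow> alg_indep_mod k I xs"
proof -
  have "mpoly_eval M c xs \<in> S" if "finite M" "\<forall>e\<in>M. c e \<in> k" for M c
    using is_subring_mpoly_eval[OF assms(1) that(1)] that(2) assms(2,3) by blast
  then show ?thesis unfolding alg_indep_mod_def by blast
qed


lemma (in field) algebraic_over_algebraic:
  assumes sF: "subfield F R" and p: "p \<noteq> []" "lead_coeff p \<noteq> \<zero>"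
    and palg: "set p \<subseteq> {y \<in> carrier R. (algebraic over F) y}"
    and x: "x \<in> carrier R" and ev: "eval p x = \<zero>"
  shows "(algebraic over F) x"
proof -
  have pc: "set p \<subseteq> carrier R" using palg by blast
  define F' where "F' = finite_extension F p"
  have sF': "subfield F' R" unfolding F'_def
    using finite_extension_is_subfield[OF sF pc] palg by blast
  have fd1: "finite_dimension F F'" unfolding F'_def
    using finite_extension_finite_dimension(1)[OF sF pc] palg by blast
  have "set p \<subseteq> F'" unfolding F'_def by (rule finite_extension_mem[OF subfieldE(1)[OF sF] pc])
  then have "p \<in> carrier (F'[X])" using p(2) unfolding sym[OF univ_poly_carrier] polynomial_def by simp
  then have "(algebraic over F') x" using algebraicI[of p F' x] p(1) ev by simp
  then have fd2: "finite_dimension F' (simple_extension F' x)"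
    using finite_dimension_simple_extension[OF sF' x] by simp
  have fd3: "finite_dimension F (simple_extension F' x)"
    by (rule telescopic_base_dim(1)[OF sF sF' fd1 fd2])
  show ?thesis
    by (rule finite_dimension_imp_algebraic[OF sF simple_extension_is_subring[OF subfieldE(1)[OF sF'] x] fd3
          simple_extension_mem[OF subfieldE(1)[OF sF'] x]])
qed

lemma (in ring) normalize_eq_Nil_imp: "normalize p = [] \<Longrightarrow> set p \<subseteq> {\<zero>}"
proof (induction p)
  case (Cons x p)
  then show ?case by (cases "x = \<zero>") auto
qed simp

fun horner :: "'a::field list \<Rightarrow> 'a \<Rightarrow> 'a" where
  "horner [] a = 0"
| "horner (b # bs) a = b * a ^ length bs + horner bs a"

lemma horner_rev_map: "horner (rev (map c [0..<N])) a = (\<Sum>i<N. c i * a ^ i)"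
proof (induction N)
  case (Suc N)
  have "rev (map c [0..<Suc N]) = c N # rev (map c [0..<N])" by simp
  then show ?case using Suc by (simp add: add.commute)
qed simp

lemma horner_eq_sum: "horner bs a = (\<Sum>i<length bs. rev bs ! i * a ^ i)"
  using horner_rev_map[of "(!) (rev bs)" "length (rev bs)" a] unfolding map_nth by simp

lemma is_subring_horner: "is_subring S \<Longrightarrow> set bs \<subseteq> S \<Longrightarrow> a \<in> S \<Longrightarrow> horner bs a \<in> S"
  by (induction bs) (auto simp: is_subring_def is_subring_power)

lemma ex_map_preimage: "set p \<subseteq> f ` Y \<Longrightarrow> \<exists>bs. set bs \<subseteq> Y \<and> map f bs = p"
proof (induction p)
  case (Cons y p)
  then obtain bs where "set bs \<subseteq> Y" "map f bs = p" by auto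
  moreover obtain b where "b \<in> Y" "f b = y" using Cons(2) by auto
  ultimately show ?case by (intro exI[of _ "b # bs"]) auto
qed simp


section \<open>Discrete valuations and their residue fields\<close>

locale valued_field =
  fixes \<nu> :: "'a::field \<Rightarrow> int"
  assumes valuation: "discrete_valuation \<nu>"
begin

lemma val_mult: "x \<noteq> 0 \<Longrightarrow> y \<noteq> 0 \<Longrightarrow> \<nu> (x * y) = \<nu> x + \<nu> y"
  using valuation unfolding discrete_valuation_def by blast

lemma val_add: "x \<noteq> 0 \<Longrightarrow> y \<noteq> 0 \<Longrightarrow> x + y \<noteq> 0 \<Longrightarrow> \<nu> (x + y) \<ge> min (\<nu> x) (\<nu> y)"
  using valuation unfolding discrete_valuation_def by blast

lemma val_one: "\<nu> 1 = 0"
  using val_mult[of 1 1] by simp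

lemma val_inverse: "x \<noteq> 0 \<Longrightarrow> \<nu> (inverse x) = - \<nu> x"
  using val_mult[of x "inverse x"] val_one by simp

lemma val_minus_one: "\<nu> (-1) = 0"
  using val_mult[of "-1" "-1"] val_one by simp

lemma val_uminus: "x \<noteq> 0 \<Longrightarrow> \<nu> (- x) = \<nu> x"
  using val_mult[of "-1" x] val_minus_one by simp

lemma val_divide: "x \<noteq> 0 \<Longrightarrow> y \<noteq> 0 \<Longrightarrow> \<nu> (x / y) = \<nu> x - \<nu> y"
  using val_mult[of x "inverse y"] val_inverse[of y] by (simp add: divide_inverse)

abbreviation "Rv \<equiv> val_ring \<nu>"
abbreviation "mv \<equiv> val_ideal \<nu>"

lemma Rv_iff: "x \<in> Rv \<longleftrightarrow> x = 0 \<or> \<nu> x \<ge> 0" by (simp add: val_ring_def)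
lemma mv_iff: "x \<in> mv \<longleftrightarrow> x = 0 \<or> \<nu> x > 0" by (simp add: val_ideal_def)

lemma Rv_add: "x \<in> Rv \<Longrightarrow> y \<in> Rv \<Longrightarrow> x + y \<in> Rv"
  unfolding Rv_iff
proof -
  assume "x = 0 \<or> 0 \<le> \<nu> x" "y = 0 \<or> 0 \<le> \<nu> y"
  then show "x + y = 0 \<or> 0 \<le> \<nu> (x + y)"
    by (cases "x = 0"; cases "y = 0"; cases "x + y = 0") (auto dest: val_add[of x y])
qed

lemma mv_add: "x \<in> mv \<Longrightarrow> y \<in> mv \<Longrightarrow> x + y \<in> mv"
  unfolding mv_iff
proof -
  assume "x = 0 \<or> 0 < \<nu> x" "y = 0 \<or> 0 < \<nu> y"
  then show "x + y = 0 \<or> 0 < \<nu> (x + y)"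
    by (cases "x = 0"; cases "y = 0"; cases "x + y = 0") (auto dest: val_add[of x y])
qed

lemma Rv_mult: "x \<in> Rv \<Longrightarrow> y \<in> Rv \<Longrightarrow> x * y \<in> Rv"
  unfolding Rv_iff by (cases "x = 0"; cases "y = 0") (auto simp: val_mult)

lemma mv_mult: "x \<in> mv \<Longrightarrow> y \<in> Rv \<Longrightarrow> y * x \<in> mv"
  unfolding Rv_iff mv_iff by (cases "x = 0"; cases "y = 0") (auto simp: val_mult)

lemma Rv_uminus: "x \<in> Rv \<Longrightarrow> - x \<in> Rv"
  unfolding Rv_iff by (cases "x = 0") (auto simp: val_uminus)

lemma mv_uminus: "x \<in> mv \<Longrightarrow> - x \<in> mv"
  unfolding mv_iff by (cases "x = 0") (auto simp: val_uminus)

lemma mv_imp_Rv: "x \<in> mv \<Longrightarrow> x \<in> Rv"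
  unfolding Rv_iff mv_iff by auto

lemma one_in_Rv: "1 \<in> Rv" by (simp add: Rv_iff val_one)
lemma one_notin_mv: "1 \<notin> mv" by (simp add: mv_iff val_one)
lemma zero_in_mv: "0 \<in> mv" by (simp add: mv_iff)

lemma notin_mv_nonzero: "x \<notin> mv \<Longrightarrow> x \<noteq> 0"
  using zero_in_mv by auto

lemma is_subring_Rv: "is_subring Rv"
  unfolding is_subring_def using Rv_add Rv_mult Rv_uminus one_in_Rv mv_imp_Rv zero_in_mv by blast

lemma is_ideal_mv: "is_ideal Rv mv"
  unfolding is_ideal_def using mv_add mv_uminus mv_mult mv_imp_Rv zero_in_mv by blast

lemma unit_val_eq_zero: "x \<in> Rv \<Longrightarrow> x \<notin> mv \<Longrightarrow> x \<noteq> 0 \<and> \<nu> x = 0"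
  unfolding Rv_iff mv_iff by auto

lemma inverse_unit: "x \<in> Rv \<Longrightarrow> x \<notin> mv \<Longrightarrow> inverse x \<in> Rv \<and> inverse x \<notin> mv"
  using unit_val_eq_zero[of x] val_inverse[of x] unfolding Rv_iff mv_iff by auto

lemma mv_prime: "x \<in> Rv \<Longrightarrow> y \<in> Rv \<Longrightarrow> x * y \<in> mv \<Longrightarrow> x \<in> mv \<or> y \<in> mv"
  unfolding Rv_iff mv_iff by (cases "x = 0"; cases "y = 0") (auto simp: val_mult)

lemma subfield_in_mv_iff:
  assumes "is_subfield k" "k \<subseteq> Rv" "c \<in> k"
  shows "c \<in> mv \<longleftrightarrow> c = 0"
proof
  assume "c \<in> mv" show "c = 0"
  proof (rule ccontr)
    assume c0: "c \<noteq> 0"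
    then have "inverse c \<in> k" using assms unfolding is_subfield_def by blast
    then have "inverse c \<in> Rv" using assms by blast
    then show False using \<open>c \<in> mv\<close> c0 val_inverse[of c] unfolding Rv_iff mv_iff by auto
  qed
qed (simp add: zero_in_mv)

lemma power_in_mv: "t \<in> mv \<Longrightarrow> 0 < n \<Longrightarrow> t ^ n \<in> mv"
proof (induction n)
  case (Suc n)
  then show ?case
    using mv_mult[of "t ^ n" t] mv_imp_Rv[of t] by (cases "n = 0") (auto simp: mult.commute)
qed simp

text \<open>The term of lowest degree has strictly the smallest valuation.\<close>

lemma sum_unit_coeffs_power_nonzero:
  assumes D: "finite D" "D \<noteq> {}" and c: "\<forall>i\<in>D. c i \<in> Rv \<and> c i \<notin> mv" and t: "t \<in> mv" "t \<noteq> 0"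
  shows "(\<Sum>i\<in>D. c i * t ^ i) \<noteq> 0"
proof -
  define i0 where "i0 = Min D"
  have i0: "i0 \<in> D" "\<And>i. i \<in> D \<Longrightarrow> i0 \<le> i" using D by (simp_all add: i0_def)
  define r where "r = (\<Sum>i\<in>D - {i0}. c i * t ^ (i - i0))"
  have "(\<Sum>i\<in>D. c i * t ^ i) = c i0 * t ^ i0 + (\<Sum>i\<in>D - {i0}. c i * t ^ i)"
    using sum.remove[OF D(1) i0(1)] by simp
  also have "(\<Sum>i\<in>D - {i0}. c i * t ^ i) = t ^ i0 * r"
    unfolding r_def sum_distrib_left
  proof (rule sum.cong[OF refl])
    fix i assume "i \<in> D - {i0}"
    then have "i0 \<le> i" using i0(2) by blast
    then have "t ^ i = t ^ i0 * t ^ (i - i0)" by (simp add: power_add[symmetric])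
    then show "c i * t ^ i = t ^ i0 * (c i * t ^ (i - i0))" by simp
  qed
  finally have sum_eq: "(\<Sum>i\<in>D. c i * t ^ i) = t ^ i0 * (c i0 + r)"
    by (simp add: distrib_left mult.commute)
  have "r \<in> mv" unfolding r_def
  proof (rule is_ideal_sum[OF is_ideal_mv])
    show "finite (D - {i0})" using D(1) by simp
    fix i assume i: "i \<in> D - {i0}"
    then have "i0 < i" using i0(2) by (simp add: order_less_le)
    then have "t ^ (i - i0) \<in> mv" using power_in_mv[OF t(1)] by simp
    moreover have "c i \<in> Rv" using c i by blast
    ultimately show "c i * t ^ (i - i0) \<in> mv" by (rule mv_mult)
  qed
  then have "c i0 + r \<notin> mv" using is_ideal_add_notin[OF is_ideal_mv] c i0(1) by blast
  then have "c i0 + r \<noteq> 0" using zero_in_mv by metis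
  with t(2) show ?thesis unfolding sum_eq by simp
qed

text \<open>Divide a relation by a coefficient of least valuation; modulo \<open>mv\<close> it does not vanish.\<close>

lemma indep_zero_of_indep_mod_val_ring:
  assumes K': "is_subfield K'" and ys: "set ys \<subseteq> Rv" and indep: "indep_mod (K' \<inter> Rv) mv ys"
  shows "indep_mod K' {0} ys"
proof (unfold indep_mod_def, intro allI impI notI)
  fix M :: "(nat \<Rightarrow> nat) set" and c
  assume H: "finite M \<and> M \<noteq> {} \<and> (\<forall>e\<in>M. \<forall>i\<ge>length ys. e i = 0) \<and> (\<forall>e\<in>M. c e \<in> K' \<and> c e \<notin> {0})"
    and zero: "mpoly_eval M c ys \<in> {0}"
  have M: "finite M" "M \<noteq> {}" and c0: "\<And>e. e \<in> M \<Longrightarrow> c e \<noteq> 0" using H by auto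
  define e0 where "e0 = arg_min_on (\<lambda>e. \<nu> (c e)) M"
  have e0: "e0 \<in> M" "\<And>e. e \<in> M \<Longrightarrow> \<nu> (c e0) \<le> \<nu> (c e)"
    using arg_min_if_finite[OF M, of "\<lambda>e. \<nu> (c e)"] by (auto simp: e0_def not_less)
  define d where "d e = c e / c e0" for e
  have d: "d e \<in> K' \<inter> Rv" if "e \<in> M" for e
  proof
    show "d e \<in> K'" using K' H that e0(1) c0[OF e0(1)] unfolding is_subfield_def d_def
      by (simp add: divide_inverse)
    show "d e \<in> Rv" using val_divide[OF c0[OF that] c0[OF e0(1)]] e0(2)[OF that] by (simp add: d_def Rv_iff)
  qed
  have "mpoly_eval M d ys = mpoly_eval M c ys / c e0"
    by (simp add: mpoly_eval_eq_sum_monom d_def sum_divide_distrib)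
  then have d_zero: "mpoly_eval M d ys = 0" using zero by simp
  define M' where "M' = {e\<in>M. d e \<notin> mv}"
  have "mpoly_eval M d ys - mpoly_eval M' d ys \<in> mv"
    unfolding M'_def using d by (intro mpoly_eval_drop_ideal_coeffs[OF is_subring_Rv is_ideal_mv _ ys M(1)]) auto
  then have "mpoly_eval M' d ys \<in> mv" using d_zero mv_uminus by fastforce
  moreover have "mpoly_eval M' d ys \<notin> mv"
  proof (rule indep_modE[OF indep])
    show "finite M'" using M(1) by (simp add: M'_def)
    show "M' \<noteq> {}" using e0(1) c0[OF e0(1)] one_notin_mv by (auto simp: M'_def d_def)
    show "\<forall>e\<in>M'. \<forall>i\<ge>length ys. e i = 0" using H by (auto simp: M'_def)
    show "\<forall>e\<in>M'. d e \<in> K' \<inter> Rv \<and> d e \<notin> mv" using d by (auto simp: M'_def)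
  qed
  ultimately show False by contradiction
qed

definition Rv_ring :: "'a ring" where
  "Rv_ring = \<lparr>carrier = Rv, mult = (\<lambda>x y. x * y), one = 1, zero = 0, add = (\<lambda>x y. x + y)\<rparr>"

lemma Rv_ring_simps [simp]: "carrier Rv_ring = Rv" "mult Rv_ring = (\<lambda>x y. x * y)" "one Rv_ring = 1" "zero Rv_ring = 0"
  "add Rv_ring = (\<lambda>x y. x + y)"
  by (simp_all add: Rv_ring_def)

lemma cring_Rv_ring: "cring Rv_ring"
proof (rule cringI)
  show "abelian_group Rv_ring"
    by (rule abelian_groupI) (auto simp: Rv_add zero_in_mv mv_imp_Rv intro!: bexI[of _ "- x" for x] Rv_uminus)
  show "comm_monoid Rv_ring"
    by (rule comm_monoidI) (auto simp: Rv_mult one_in_Rv)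
qed (simp add: distrib_right)

interpretation Rv_ring: cring Rv_ring by (rule cring_Rv_ring)

lemma Rv_ring_a_inv: "x \<in> Rv \<Longrightarrow> \<ominus>\<^bsub>Rv_ring\<^esub> x = - x"
  by (rule Rv_ring.minus_equality) (auto intro: Rv_uminus)

lemma ideal_mv: "ideal mv Rv_ring"
proof (rule idealI)
  show "ring Rv_ring" by (rule Rv_ring.ring_axioms)
  show "subgroup mv (add_monoid Rv_ring)"
  proof
    show "mv \<subseteq> carrier (add_monoid Rv_ring)" using mv_imp_Rv by auto
    show "x \<otimes>\<^bsub>add_monoid Rv_ring\<^esub> y \<in> mv" if "x \<in> mv" "y \<in> mv" for x y
      using that mv_add by simp
    show "\<one>\<^bsub>add_monoid Rv_ring\<^esub> \<in> mv" using zero_in_mv by simp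
    show "inv\<^bsub>add_monoid Rv_ring\<^esub> x \<in> mv" if "x \<in> mv" for x
      using that Rv_ring_a_inv[of x] mv_imp_Rv[of x] mv_uminus[of x] unfolding a_inv_def by simp
  qed
  show "x \<otimes>\<^bsub>Rv_ring\<^esub> a \<in> mv" if "a \<in> mv" "x \<in> carrier Rv_ring" for a x using that mv_mult by simp
  show "a \<otimes>\<^bsub>Rv_ring\<^esub> x \<in> mv" if "a \<in> mv" "x \<in> carrier Rv_ring" for a x using that mv_mult[of a x]
    by (simp add: mult.commute)
qed

lemma maximalideal_mv: "maximalideal mv Rv_ring"
proof (rule maximalidealI[OF ideal_mv])
  show "carrier Rv_ring \<noteq> mv" using one_in_Rv one_notin_mv by auto
  fix J assume J: "ideal J Rv_ring" "mv \<subseteq> J" "J \<subseteq> carrier Rv_ring"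
  show "J = mv \<or> J = carrier Rv_ring"
  proof (cases "J = mv")
    case False
    then obtain u where u: "u \<in> J" "u \<notin> mv" using J(2) by blast
    then have uR: "u \<in> Rv" using J(3) by auto
    have "inverse u * u \<in> J"
      using ideal.I_l_closed[OF J(1) u(1), of "inverse u"] inverse_unit[OF uR u(2)] by simp
    then have one: "1 \<in> J" using unit_val_eq_zero[OF uR u(2)] by simp
    have "carrier Rv_ring \<subseteq> J"
    proof
      fix x assume "x \<in> carrier Rv_ring"
      then show "x \<in> J" using ideal.I_l_closed[OF J(1) one, of x] by simp
    qed
    then show ?thesis using J(3) by blast
  qed simp
qed

definition res_field :: "'a set ring" where "res_field = Rv_ring Quot mv"
definition res :: "'a \<Rightarrow> 'a set" where "res x = mv +>\<^bsub>Rv_ring\<^esub> x"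

lemma field_res_field: "field res_field"
  unfolding res_field_def by (rule maximalideal.quotient_is_field[OF maximalideal_mv cring_Rv_ring])

interpretation res_field: field res_field by (rule field_res_field)

lemma ring_hom_res: "ring_hom_ring Rv_ring res_field res"
proof -
  have "res = (+>\<^bsub>Rv_ring\<^esub>) mv" by (rule ext) (simp add: res_def)
  then show ?thesis unfolding res_field_def using ideal.rcos_ring_hom_ring[OF ideal_mv] by simp
qed

interpretation res: ring_hom_ring Rv_ring res_field res by (rule ring_hom_res)

lemma res_add: "x \<in> Rv \<Longrightarrow> y \<in> Rv \<Longrightarrow> res (x + y) = res x \<oplus>\<^bsub>res_field\<^esub> res y"
  using res.hom_add[of x y] by simp
lemma res_mult: "x \<in> Rv \<Longrightarrow> y \<in> Rv \<Longrightarrow> res (x * y) = res x \<otimes>\<^bsub>res_field\<^esub> res y"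
  using res.hom_mult[of x y] by simp
lemma res_one: "res 1 = \<one>\<^bsub>res_field\<^esub>"
  using res.hom_one by simp
lemma res_in_carrier: "x \<in> Rv \<Longrightarrow> res x \<in> carrier res_field"
  using res.hom_closed[of x] by simp
lemma res_power: "x \<in> Rv \<Longrightarrow> res (x ^ n) = res x [^]\<^bsub>res_field\<^esub> n"
proof (induction n)
  case 0 then show ?case using res_one by simp
next
  case (Suc n)
  have "res (x ^ Suc n) = res (x ^ n * x)" by (simp add: mult.commute)
  also have "\<dots> = res (x ^ n) \<otimes>\<^bsub>res_field\<^esub> res x"
    by (rule res_mult) (use Suc is_subring_power[OF is_subring_Rv] in auto)
  finally show ?case using Suc by simp
qed

lemma res_eq_zero_iff: "x \<in> Rv \<Longrightarrow> res x = \<zero>\<^bsub>res_field\<^esub> \<longleftrightarrow> x \<in> mv"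
proof -
  assume x: "x \<in> Rv"
  interpret I: ideal mv Rv_ring by (rule ideal_mv)
  have z: "\<zero>\<^bsub>res_field\<^esub> = mv" by (simp add: res_field_def FactRing_def)
  show ?thesis
  proof
    assume "res x = \<zero>\<^bsub>res_field\<^esub>"
    then have "mv +>\<^bsub>Rv_ring\<^esub> x = mv" using z res_def by simp
    moreover have "x \<in> mv +>\<^bsub>Rv_ring\<^esub> x" using I.a_rcos_self[of x] x by simp
    ultimately show "x \<in> mv" by simp
  next
    assume "x \<in> mv" then show "res x = \<zero>\<^bsub>res_field\<^esub>" using z I.a_rcos_const[of x] res_def by simp
  qed
qed

lemma eval_map_res: "set bs \<subseteq> Rv \<Longrightarrow> a \<in> Rv \<Longrightarrow> res_field.eval (map res bs) (res a) = res (horner bs a)"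
proof (induction bs)
  case Nil then show ?case using res.hom_zero by simp
next
  case (Cons b bs)
  have bR: "b \<in> Rv" and bsR: "set bs \<subseteq> Rv" using Cons by auto
  have pw: "a ^ length bs \<in> Rv" using is_subring_power[OF is_subring_Rv Cons(3)] .
  have pe: "horner bs a \<in> Rv" using is_subring_horner[OF is_subring_Rv bsR Cons(3)] .
  have "res_field.eval (map res (b # bs)) (res a) = res b \<otimes>\<^bsub>res_field\<^esub> (res a [^]\<^bsub>res_field\<^esub> length bs) \<oplus>\<^bsub>res_field\<^esub> res_field.eval (map res bs) (res a)"
    by simp
  also have "\<dots> = res (b * a ^ length bs + horner bs a)"
    using Cons(1)[OF bsR Cons(3)] res_power[OF Cons(3)] res_mult[OF bR pw] res_add[OF Rv_mult[OF bR pw] pe] by simp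
  finally show ?case by simp
qed

lemma algebraic_mod_imp_res_algebraic:
  assumes Y: "Y \<subseteq> Rv" "0 \<in> Y" and a: "a \<in> Rv" and ra: "algebraic_mod mv Y a"
  shows "\<exists>p. polynomial\<^bsub>res_field\<^esub> (res ` Y) p \<and> p \<noteq> [] \<and> res_field.eval p (res a) = \<zero>\<^bsub>res_field\<^esub>"
proof -
  obtain D c i0 where D: "finite D" "\<forall>i\<in>D. c i \<in> Y" "i0 \<in> D" "c i0 \<notin> mv" "(\<Sum>i\<in>D. c i * a ^ i) \<in> mv"
    using ra unfolding algebraic_mod_def by blast
  define N where "N = Suc (Max D)"
  have DN: "D \<subseteq> {..<N}" using D(1) by (auto simp: N_def less_Suc_eq_le)
  define c' where "c' i = (if i \<in> D then c i else 0)" for i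
  define bs where "bs = rev (map c' [0..<N])"
  have bsX: "set bs \<subseteq> Y" using D(2) Y(2) by (auto simp: bs_def c'_def)
  have bsR: "set bs \<subseteq> Rv" using bsX Y(1) by blast
  have "horner bs a = (\<Sum>i<N. c' i * a ^ i)" unfolding bs_def by (rule horner_rev_map)
  also have "\<dots> = (\<Sum>i\<in>D. c i * a ^ i)"
    by (rule sum.mono_neutral_cong_right) (use DN in \<open>auto simp: c'_def\<close>)
  finally have "horner bs a \<in> mv" using D(5) by simp
  then have ev0: "res_field.eval (map res bs) (res a) = \<zero>\<^bsub>res_field\<^esub>"
    using eval_map_res[OF bsR a] res_eq_zero_iff is_subring_horner[OF is_subring_Rv bsR a] by simp
  define p where "p = res_field.normalize (map res bs)"
  have mc: "set (map res bs) \<subseteq> carrier res_field" using bsR res_in_carrier by auto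
  have "res_field.eval p (res a) = \<zero>\<^bsub>res_field\<^esub>"
    unfolding p_def using res_field.eval_normalize[OF mc res_in_carrier[OF a]] ev0 by simp
  moreover have "polynomial\<^bsub>res_field\<^esub> (res ` Y) p"
    unfolding p_def by (rule res_field.normalize_gives_polynomial) (use bsX in auto)
  moreover have "p \<noteq> []"
  proof
    assume "p = []"
    then have "set (map res bs) \<subseteq> {\<zero>\<^bsub>res_field\<^esub>}" using res_field.normalize_eq_Nil_imp[of "map res bs"] p_def by simp
    moreover have "c i0 \<in> set bs" using D(3) DN by (force simp: bs_def c'_def)
    ultimately have "res (c i0) = \<zero>\<^bsub>res_field\<^esub>" by auto
    then show False using res_eq_zero_iff D(2,3,4) Y(1) by blast
  qed
  ultimately show ?thesis by blast
qed

lemma res_algebraic_imp_algebraic_mod: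
  assumes Y: "Y \<subseteq> Rv" and sub: "subring (res ` Y) res_field" and a: "a \<in> Rv"
    and alg: "(ring.algebraic res_field over (res ` Y)) (res a)"
  shows "algebraic_mod mv Y a"
proof -
  obtain p where p: "p \<in> carrier ((res ` Y) [X]\<^bsub>res_field\<^esub>)" "p \<noteq> []" "res_field.eval p (res a) = \<zero>\<^bsub>res_field\<^esub>"
    by (rule res_field.algebraicE[OF sub res_in_carrier[OF a] alg])
  have pol: "polynomial\<^bsub>res_field\<^esub> (res ` Y) p" using p(1) by (simp only: univ_poly_carrier[symmetric])
  then have ps: "set p \<subseteq> res ` Y" and lc: "hd p \<noteq> \<zero>\<^bsub>res_field\<^esub>" using p(2) unfolding polynomial_def by simp_all
  obtain bs where bs: "set bs \<subseteq> Y" "map res bs = p" using ex_map_preimage[OF ps] by (elim exE conjE)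
  have bsR: "set bs \<subseteq> Rv" using bs Y by (meson order_trans)
  have "res (horner bs a) = \<zero>\<^bsub>res_field\<^esub>" using eval_map_res[OF bsR a] bs(2) p(3) by simp
  then have pm: "horner bs a \<in> mv" using res_eq_zero_iff[OF is_subring_horner[OF is_subring_Rv bsR a]] by simp
  have bsne: "bs \<noteq> []" using bs(2) p(2) by auto
  define n where "n = length bs"
  have n0: "n > 0" using bsne by (simp add: n_def)
  have "rev bs ! (n - 1) = bs ! 0" using n0 by (simp add: n_def rev_nth)
  also have "\<dots> = hd bs" using bsne by (simp add: hd_conv_nth)
  finally have rh: "rev bs ! (n - 1) = hd bs" .
  have "res (hd bs) = hd p" using bs(2) bsne by (cases bs) auto
  then have "res (hd bs) \<noteq> \<zero>\<^bsub>res_field\<^esub>" using lc by simp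
  moreover have "hd bs \<in> Rv" using bsne bsR by (simp add: subset_iff)
  ultimately have c0: "rev bs ! (n - 1) \<notin> mv" using res_eq_zero_iff rh by simp
  have c1: "\<forall>i\<in>{..<n}. rev bs ! i \<in> Y"
  proof
    fix i assume "i \<in> {..<n}"
    then have "rev bs ! i \<in> set (rev bs)" by (intro nth_mem) (simp add: n_def)
    then show "rev bs ! i \<in> Y" using bs(1) by auto
  qed
  have c2: "n - 1 \<in> {..<n}" using n0 by simp
  have c3: "(\<Sum>i\<in>{..<n}. rev bs ! i * a ^ i) \<in> mv" using pm unfolding horner_eq_sum n_def .
  show ?thesis by (rule algebraic_modI[OF _ c1 c2 c0 c3]) simp
qed

lemma res_uminus: "x \<in> Rv \<Longrightarrow> res (- x) = \<ominus>\<^bsub>res_field\<^esub> res x"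
proof -
  assume x: "x \<in> Rv"
  have "res (- x) \<oplus>\<^bsub>res_field\<^esub> res x = res (- x + x)" using res_add[OF Rv_uminus[OF x] x] by simp
  also have "\<dots> = \<zero>\<^bsub>res_field\<^esub>" using res_eq_zero_iff[of 0] zero_in_mv mv_imp_Rv by simp
  finally show ?thesis
    by (intro res_field.minus_equality[symmetric]) (auto intro: res_in_carrier x Rv_uminus)
qed

text \<open>The localization of \<open>P\<close> at those of its elements that are units of \<open>Rv\<close>; its residues form
  the fraction field of the residues of \<open>P\<close>.\<close>

definition unit_fracs :: "'a set \<Rightarrow> 'a set" where
  "unit_fracs P = {p * inverse q | p q. p \<in> P \<and> q \<in> P \<and> q \<notin> mv}"

lemma unit_fracsI: "p \<in> P \<Longrightarrow> q \<in> P \<Longrightarrow> q \<notin> mv \<Longrightarrow> p * inverse q \<in> unit_fracs P"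
  unfolding unit_fracs_def by blast

lemma unit_fracsE: "x \<in> unit_fracs P \<Longrightarrow> (\<And>p q. p \<in> P \<Longrightarrow> q \<in> P \<Longrightarrow> q \<notin> mv \<Longrightarrow> x = p * inverse q \<Longrightarrow> thesis) \<Longrightarrow> thesis"
  unfolding unit_fracs_def by blast

lemma prod_notin_mv: "finite D \<Longrightarrow> (\<And>i. i \<in> D \<Longrightarrow> f i \<in> Rv \<and> f i \<notin> mv) \<Longrightarrow> prod f D \<notin> mv"
proof (induction D rule: finite_induct)
  case empty then show ?case using one_notin_mv by simp
next
  case (insert x F)
  have "prod f F \<in> Rv" using insert is_subring_prod[OF is_subring_Rv, of F f] by blast
  then show ?case using insert mv_prime[of "f x" "prod f F"] by auto
qed

context
  fixes P assumes sP: "is_subring P" and PR: "P \<subseteq> Rv"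
begin

lemma unit_fracs_Rv: "x \<in> unit_fracs P \<Longrightarrow> x \<in> Rv"
  by (erule unit_fracsE) (use PR inverse_unit Rv_mult in blast)

lemma in_unit_fracs: "x \<in> P \<Longrightarrow> x \<in> unit_fracs P"
  using unit_fracsI[of x P 1] sP one_notin_mv unfolding is_subring_def by simp

lemma unit_fracs_add: "x \<in> unit_fracs P \<Longrightarrow> y \<in> unit_fracs P \<Longrightarrow> x + y \<in> unit_fracs P"
proof -
  assume "x \<in> unit_fracs P" "y \<in> unit_fracs P"
  then obtain p q p' q' where pq: "p \<in> P" "q \<in> P" "q \<notin> mv" "x = p * inverse q"
    "p' \<in> P" "q' \<in> P" "q' \<notin> mv" "y = p' * inverse q'" by (metis unit_fracsE)
  have "x + y = (p * q' + p' * q) * inverse (q * q')"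
    using pq notin_mv_nonzero by (simp add: field_simps)
  moreover have "q * q' \<notin> mv" using pq PR mv_prime by blast
  moreover have "p * q' + p' * q \<in> P" "q * q' \<in> P" using pq sP unfolding is_subring_def by blast+
  ultimately show ?thesis using unit_fracsI by metis
qed

lemma unit_fracs_mult: "x \<in> unit_fracs P \<Longrightarrow> y \<in> unit_fracs P \<Longrightarrow> x * y \<in> unit_fracs P"
proof -
  assume "x \<in> unit_fracs P" "y \<in> unit_fracs P"
  then obtain p q p' q' where pq: "p \<in> P" "q \<in> P" "q \<notin> mv" "x = p * inverse q"
    "p' \<in> P" "q' \<in> P" "q' \<notin> mv" "y = p' * inverse q'" by (metis unit_fracsE)
  have "x * y = (p * p') * inverse (q * q')"
    using pq by (simp add: inverse_mult_distrib mult_ac)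
  moreover have "q * q' \<notin> mv" using pq PR mv_prime by blast
  moreover have "p * p' \<in> P" "q * q' \<in> P" using pq sP unfolding is_subring_def by blast+
  ultimately show ?thesis using unit_fracsI by metis
qed

lemma unit_fracs_uminus: "x \<in> unit_fracs P \<Longrightarrow> - x \<in> unit_fracs P"
proof -
  assume "x \<in> unit_fracs P"
  then obtain p q where pq: "p \<in> P" "q \<in> P" "q \<notin> mv" "x = p * inverse q" by (metis unit_fracsE)
  have "- x = (- p) * inverse q" using pq by simp
  moreover have "- p \<in> P" using pq sP unfolding is_subring_def by blast
  ultimately show ?thesis using unit_fracsI pq by metis
qed

lemma unit_fracs_inverse: "x \<in> unit_fracs P \<Longrightarrow> x \<notin> mv \<Longrightarrow> inverse x \<in> unit_fracs P"
proof -
  assume x: "x \<in> unit_fracs P" "x \<notin> mv"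
  then obtain p q where pq: "p \<in> P" "q \<in> P" "q \<notin> mv" "x = p * inverse q" by (metis unit_fracsE)
  have "p \<notin> mv"
  proof
    assume "p \<in> mv"
    then have "inverse q * p \<in> mv" using mv_mult inverse_unit pq PR by blast
    then show False using x(2) pq(4) by (simp add: mult.commute)
  qed
  moreover have "inverse x = q * inverse p" using pq by simp
  ultimately show ?thesis using unit_fracsI pq by metis
qed

lemma algebraic_mod_clear_denominators:
  assumes a: "a \<in> Rv" and ra: "algebraic_mod mv (unit_fracs P) a"
  shows "algebraic_mod mv P a"
proof -
  obtain D c i0 where D: "finite D" "\<forall>i\<in>D. c i \<in> unit_fracs P" "i0 \<in> D" "c i0 \<notin> mv" "(\<Sum>i\<in>D. c i * a ^ i) \<in> mv"
    using ra unfolding algebraic_mod_def by blast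
  have "\<forall>i\<in>D. \<exists>pq. fst pq \<in> P \<and> snd pq \<in> P \<and> snd pq \<notin> mv \<and> c i = fst pq * inverse (snd pq)"
    using D(2) by (metis unit_fracsE fst_conv snd_conv)
  then obtain f where f: "\<forall>i\<in>D. fst (f i) \<in> P \<and> snd (f i) \<in> P \<and> snd (f i) \<notin> mv \<and> c i = fst (f i) * inverse (snd (f i))"
    by (metis (no_types, lifting) bchoice)
  define Q where "Q = (\<Prod>i\<in>D. snd (f i))"
  have QP: "Q \<in> P" unfolding Q_def by (rule is_subring_prod[OF sP D(1)]) (use f in blast)
  have QR: "Q \<in> Rv" using QP PR by blast
  have Qm: "Q \<notin> mv" unfolding Q_def by (rule prod_notin_mv[OF D(1)]) (use f PR in blast)
  define c' where "c' i = Q * c i" for i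
  have c'P: "c' i \<in> P" if i: "i \<in> D" for i
  proof -
    have "Q = snd (f i) * (\<Prod>j\<in>D - {i}. snd (f j))" unfolding Q_def using D(1) i by (rule prod.remove)
    then have "c' i = fst (f i) * (\<Prod>j\<in>D - {i}. snd (f j))"
      using f i notin_mv_nonzero[of "snd (f i)"] by (simp add: c'_def field_simps)
    moreover have "(\<Prod>j\<in>D - {i}. snd (f j)) \<in> P" by (rule is_subring_prod[OF sP]) (use D(1) f in auto)
    ultimately show ?thesis using f i sP unfolding is_subring_def by metis
  qed
  have "(\<Sum>i\<in>D. c' i * a ^ i) = Q * (\<Sum>i\<in>D. c i * a ^ i)"
    by (simp add: c'_def sum_distrib_left mult.assoc)
  also have "\<dots> \<in> mv" using mv_mult[OF D(5) QR] .
  finally have s: "(\<Sum>i\<in>D. c' i * a ^ i) \<in> mv" .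
  have "c' i0 \<notin> mv" unfolding c'_def using mv_prime[of Q "c i0"] Qm D(2,3,4) QR unit_fracs_Rv by blast
  then show ?thesis using c'P D(1,3) s unfolding algebraic_mod_def by blast
qed

lemma subfield_res_unit_fracs: "subfield (res ` unit_fracs P) res_field"
proof (rule res_field.subfieldI'[OF res_field.subringI])
  show "res ` unit_fracs P \<subseteq> carrier res_field" using res_in_carrier unit_fracs_Rv by (meson image_subsetI)
  have "1 \<in> unit_fracs P" using in_unit_fracs sP unfolding is_subring_def by blast
  then show "\<one>\<^bsub>res_field\<^esub> \<in> res ` unit_fracs P" using res_one by (metis imageI)
  show "\<ominus>\<^bsub>res_field\<^esub> h \<in> res ` unit_fracs P" if hA: "h \<in> res ` unit_fracs P" for h
  proof -
    obtain x where x: "x \<in> unit_fracs P" "h = res x" using hA by (elim imageE)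
    then have "\<ominus>\<^bsub>res_field\<^esub> h = res (- x)" using res_uminus[OF unit_fracs_Rv[OF x(1)]] by simp
    then show ?thesis using unit_fracs_uminus[OF x(1)] by simp
  qed
  show "h1 \<otimes>\<^bsub>res_field\<^esub> h2 \<in> res ` unit_fracs P" if hA: "h1 \<in> res ` unit_fracs P" and hB: "h2 \<in> res ` unit_fracs P" for h1 h2
  proof -
    obtain x where x: "x \<in> unit_fracs P" "h1 = res x" using hA by (elim imageE)
    obtain y where y: "y \<in> unit_fracs P" "h2 = res y" using hB by (elim imageE)
    have "h1 \<otimes>\<^bsub>res_field\<^esub> h2 = res (x * y)" using res_mult[OF unit_fracs_Rv[OF x(1)] unit_fracs_Rv[OF y(1)]] x y by simp
    then show ?thesis using unit_fracs_mult[OF x(1) y(1)] by simp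
  qed
  show "h1 \<oplus>\<^bsub>res_field\<^esub> h2 \<in> res ` unit_fracs P" if hA: "h1 \<in> res ` unit_fracs P" and hB: "h2 \<in> res ` unit_fracs P" for h1 h2
  proof -
    obtain x where x: "x \<in> unit_fracs P" "h1 = res x" using hA by (elim imageE)
    obtain y where y: "y \<in> unit_fracs P" "h2 = res y" using hB by (elim imageE)
    have "h1 \<oplus>\<^bsub>res_field\<^esub> h2 = res (x + y)" using res_add[OF unit_fracs_Rv[OF x(1)] unit_fracs_Rv[OF y(1)]] x y by simp
    then show ?thesis using unit_fracs_add[OF x(1) y(1)] by simp
  qed
  show "inv\<^bsub>res_field\<^esub> k \<in> res ` unit_fracs P" if kA: "k \<in> res ` unit_fracs P - {\<zero>\<^bsub>res_field\<^esub>}" for k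
  proof -
    obtain x where x: "x \<in> unit_fracs P" "k = res x" using kA by (elim DiffE imageE)
    have xR: "x \<in> Rv" using unit_fracs_Rv x by blast
    have xm: "x \<notin> mv" using kA x res_eq_zero_iff[OF xR] by simp
    have ix: "inverse x \<in> unit_fracs P" using unit_fracs_inverse x xm by blast
    have "res x \<otimes>\<^bsub>res_field\<^esub> res (inverse x) = res (x * inverse x)" using res_mult[OF xR unit_fracs_Rv[OF ix]] by simp
    also have "\<dots> = \<one>\<^bsub>res_field\<^esub>" using res_one unit_val_eq_zero[OF xR xm] by simp
    finally have "inv\<^bsub>res_field\<^esub> (res x) = res (inverse x)"
      by (rule res_field.comm_inv_char[OF res_in_carrier[OF xR] res_in_carrier[OF unit_fracs_Rv[OF ix]]])
    then show ?thesis using x ix by simp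
  qed
qed

end

definition res_closure :: "'a set \<Rightarrow> 'a set" where
  "res_closure P = {a \<in> Rv. algebraic_mod mv P a}"
definition res_algebraics :: "'a set \<Rightarrow> 'a set set" where
  "res_algebraics P = {y \<in> carrier res_field. (ring.algebraic res_field over (res ` unit_fracs P)) y}"

context
  fixes P assumes sP: "is_subring P" and PR: "P \<subseteq> Rv"
begin

lemma zero_in_unit_fracs: "0 \<in> unit_fracs P" using in_unit_fracs[OF sP PR] sP unfolding is_subring_def by blast

lemma unit_fracs_subset_Rv: "unit_fracs P \<subseteq> Rv" using unit_fracs_Rv[OF sP PR] by blast

lemma algebraic_mod_iff_res_algebraic: "a \<in> Rv \<Longrightarrow> algebraic_mod mv P a \<longleftrightarrow> res a \<in> res_algebraics P"
proof
  assume a: "a \<in> Rv" and r: "algebraic_mod mv P a"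
  have "algebraic_mod mv (unit_fracs P) a" by (rule algebraic_mod_mono[OF _ r]) (use in_unit_fracs[OF sP PR] in blast)
  from algebraic_mod_imp_res_algebraic[OF unit_fracs_subset_Rv zero_in_unit_fracs a this] obtain p where
    p: "polynomial\<^bsub>res_field\<^esub> (res ` unit_fracs P) p" "p \<noteq> []" "res_field.eval p (res a) = \<zero>\<^bsub>res_field\<^esub>"
    by (elim exE conjE)
  have "p \<in> carrier ((res ` unit_fracs P) [X]\<^bsub>res_field\<^esub>)" using p(1) by (simp only: univ_poly_carrier)
  then have "(ring.algebraic res_field over (res ` unit_fracs P)) (res a)" by (rule res_field.algebraicI[OF _ p(2,3)])
  then show "res a \<in> res_algebraics P" unfolding res_algebraics_def using res_in_carrier[OF a] by simp
next
  assume a: "a \<in> Rv" and h: "res a \<in> res_algebraics P"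
  have "algebraic_mod mv (unit_fracs P) a"
    by (rule res_algebraic_imp_algebraic_mod[OF unit_fracs_subset_Rv subfieldE(1)[OF subfield_res_unit_fracs[OF sP PR]] a]) (use h in \<open>simp add: res_algebraics_def\<close>)
  then show "algebraic_mod mv P a" by (rule algebraic_mod_clear_denominators[OF sP PR a])
qed

lemma subfield_res_algebraics: "subfield (res_algebraics P) res_field"
  unfolding res_algebraics_def by (rule res_field.subfield_of_algebraics[OF subfield_res_unit_fracs[OF sP PR]])

lemma res_closure_iff: "a \<in> res_closure P \<longleftrightarrow> a \<in> Rv \<and> res a \<in> res_algebraics P"
  unfolding res_closure_def using algebraic_mod_iff_res_algebraic by blast

lemma res_closure_add: "a \<in> res_closure P \<Longrightarrow> b \<in> res_closure P \<Longrightarrow> a + b \<in> res_closure P"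
  unfolding res_closure_iff using res_add subringE(7)[OF subfieldE(1)[OF subfield_res_algebraics]] Rv_add by metis

lemma res_closure_mult: "a \<in> res_closure P \<Longrightarrow> b \<in> res_closure P \<Longrightarrow> a * b \<in> res_closure P"
  unfolding res_closure_iff using res_mult subringE(6)[OF subfieldE(1)[OF subfield_res_algebraics]] Rv_mult by metis

lemma res_closure_uminus: "a \<in> res_closure P \<Longrightarrow> - a \<in> res_closure P"
  unfolding res_closure_iff using res_uminus subringE(5)[OF subfieldE(1)[OF subfield_res_algebraics]] Rv_uminus by metis

lemma in_res_closure: "b \<in> P \<Longrightarrow> b \<in> res_closure P"
proof -
  assume b: "b \<in> P"
  define c where "c i = (if i = 0 then - b else 1)" for i :: nat
  have "(\<Sum>i\<in>{0,1::nat}. c i * b ^ i) = 0" by (simp add: c_def)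
  then have "algebraic_mod mv P b"
    using sP b zero_in_mv one_notin_mv unfolding is_subring_def
    by (intro algebraic_modI[of "{0,1}" c P 1]) (auto simp: c_def)
  then show ?thesis unfolding res_closure_def using b PR by blast
qed

lemma is_subring_res_closure: "is_subring (res_closure P)"
  unfolding is_subring_def using in_res_closure res_closure_add res_closure_mult res_closure_uminus sP unfolding is_subring_def by blast

lemma res_closure_trans:
  assumes E: "E \<subseteq> Rv" "0 \<in> E" "E \<subseteq> res_closure P" and a: "a \<in> Rv" and r: "algebraic_mod mv E a"
  shows "a \<in> res_closure P"
proof -
  obtain p where p: "polynomial\<^bsub>res_field\<^esub> (res ` E) p" "p \<noteq> []" "res_field.eval p (res a) = \<zero>\<^bsub>res_field\<^esub>"
    using algebraic_mod_imp_res_algebraic[OF E(1,2) a r] by (elim exE conjE)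
  have lc: "lead_coeff p \<noteq> \<zero>\<^bsub>res_field\<^esub>" using p(1,2) unfolding polynomial_def by simp
  have "set p \<subseteq> res ` E" using p(1,2) unfolding polynomial_def by simp
  also have "\<dots> \<subseteq> res_algebraics P" using E(3) res_closure_iff by blast
  finally have sp: "set p \<subseteq> {y \<in> carrier res_field. (ring.algebraic res_field over (res ` unit_fracs P)) y}"
    unfolding res_algebraics_def .
  have "(ring.algebraic res_field over (res ` unit_fracs P)) (res a)"
    by (rule res_field.algebraic_over_algebraic[OF subfield_res_unit_fracs[OF sP PR] p(2) lc sp res_in_carrier[OF a] p(3)])
  then show ?thesis unfolding res_closure_iff res_algebraics_def using a res_in_carrier[OF a] by simp
qed

end

end



section \<open>Residual transcendence over a subfield of the valuation ring\<close>

locale valued_field_over = valued_field +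
  fixes k :: "'a set"
  assumes subfield_k: "is_subfield k" and k_subset_Rv: "k \<subseteq> Rv"
begin

lemma is_subring_k: "is_subring k"
  by (rule is_subring_subfield[OF subfield_k])

lemma adjoin_k_subset_Rv: "set xs \<subseteq> Rv \<Longrightarrow> adjoin k xs \<subseteq> Rv"
  by (rule adjoin_least[OF is_subring_Rv k_subset_Rv])

lemma k_inter_mv: "c \<in> k \<Longrightarrow> c \<in> mv \<longleftrightarrow> c = 0"
  using subfield_in_mv_iff[OF subfield_k k_subset_Rv] .

text \<open>The closure operator of the algebraic matroid of the residue field over \<open>k\<close>, pulled back
  to \<open>Rv\<close>.\<close>

definition cl :: "'a list \<Rightarrow> 'a set" where
  "cl xs = res_closure (adjoin k xs)"

lemma cl_iff: "a \<in> cl xs \<longleftrightarrow> a \<in> Rv \<and> algebraic_mod mv (adjoin k xs) a"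
  by (simp add: cl_def res_closure_def)

lemma cl_mono: "set xs \<subseteq> set ys \<Longrightarrow> cl xs \<subseteq> cl ys"
  using algebraic_mod_mono[OF adjoin_mono_set[OF is_subring_k]] by (auto simp: cl_iff)

lemma cl_set_eq: "set xs = set ys \<Longrightarrow> cl xs = cl ys"
  by (simp add: cl_mono subset_antisym)

lemma is_subring_cl: "set xs \<subseteq> Rv \<Longrightarrow> is_subring (cl xs)"
  unfolding cl_def by (rule is_subring_res_closure[OF is_subring_adjoin[OF is_subring_k] adjoin_k_subset_Rv])

lemma adjoin_subset_cl: "set xs \<subseteq> Rv \<Longrightarrow> adjoin k xs \<subseteq> cl xs"
  unfolding cl_def using in_res_closure[OF is_subring_adjoin[OF is_subring_k] adjoin_k_subset_Rv] by blast

lemma set_subset_cl: "set xs \<subseteq> Rv \<Longrightarrow> set xs \<subseteq> cl xs"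
  using adjoin_subset_cl set_subset_adjoin[of k xs] is_subring_k unfolding is_subring_def by blast

lemma cl_trans:
  assumes "set ys \<subseteq> Rv" "E \<subseteq> Rv" "0 \<in> E" "E \<subseteq> cl ys" "a \<in> Rv" "algebraic_mod mv E a"
  shows "a \<in> cl ys"
  using assms unfolding cl_def
  by (intro res_closure_trans[OF is_subring_adjoin[OF is_subring_k] adjoin_k_subset_Rv]) auto

lemma cl_subset_cl:
  assumes xs: "set xs \<subseteq> Rv" and ys: "set ys \<subseteq> Rv" and sub: "set xs \<subseteq> cl ys"
  shows "cl xs \<subseteq> cl ys"
proof
  fix a assume "a \<in> cl xs"
  then have a: "a \<in> Rv" "algebraic_mod mv (adjoin k xs) a" by (auto simp: cl_iff)
  have "adjoin k xs \<subseteq> cl ys"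
    using adjoin_least[OF is_subring_cl[OF ys] _ sub] adjoin_subset_cl[OF ys] subset_adjoin[of k ys] by blast
  moreover have "0 \<in> adjoin k xs" using const_in_adjoin is_subring_k unfolding is_subring_def by blast
  ultimately show "a \<in> cl ys" using cl_trans[OF ys adjoin_k_subset_Rv[OF xs] _ _ a] by blast
qed

lemma indep_mod_snoc_iff:
  assumes xs: "set xs \<subseteq> Rv" and a: "a \<in> Rv"
  shows "indep_mod k mv (xs @ [a]) \<longleftrightarrow> indep_mod k mv xs \<and> a \<notin> cl xs"
  using indep_mod_appendD indep_mod_snocI[of k mv xs a] a
    indep_mod_snoc_not_algebraic[OF is_subring_Rv is_ideal_mv k_subset_Rv xs a]
  by (auto simp: cl_iff)

lemma cl_exchange:
  assumes S: "set S \<subseteq> Rv" and a: "a \<in> Rv" and b: "b \<in> Rv"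
    and indep: "indep_mod k mv (S @ [a])" and b_notin: "b \<notin> cl (S @ [a])"
  shows "a \<notin> cl (S @ [b])"
proof -
  have "indep_mod k mv ((S @ [a]) @ [b])" using indep_mod_snoc_iff[of "S @ [a]" b] S a b indep b_notin by simp
  then have "indep_mod k mv ((S @ [b]) @ [a])" by (rule indep_mod_perm) simp
  then show ?thesis using indep_mod_snoc_iff[of "S @ [b]" a] S a b by simp
qed

lemma cl_snoc_swap:
  assumes S: "set S \<subseteq> Rv" and b: "b \<in> Rv" and y: "y \<in> Rv"
    and indep: "indep_mod k mv S" and y_in: "y \<in> cl (S @ [b])" and y_notin: "y \<notin> cl S"
  shows "cl (S @ [b]) \<subseteq> cl (S @ [y])"
proof -
  have "indep_mod k mv (S @ [y])" using indep_mod_snoc_iff[OF S y] indep y_notin by simp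
  then have "b \<in> cl (S @ [y])" using cl_exchange[OF S y b] y_in by blast
  then show ?thesis using S b y set_subset_cl[of "S @ [y]"] by (intro cl_subset_cl) auto
qed

lemma indep_mod_extend_spanning:
  assumes xs: "set xs \<subseteq> Rv" "indep_mod k mv xs" and ys: "set ys \<subseteq> Rv"
  obtains J where "indep_mod k mv (xs @ J)" "set J \<subseteq> set ys" "length J \<le> length ys" "set ys \<subseteq> cl (xs @ J)"
proof -
  have "\<exists>J. indep_mod k mv (xs @ J) \<and> set J \<subseteq> set ys \<and> length J \<le> length ys \<and> set ys \<subseteq> cl (xs @ J)"
    using ys
  proof (induction ys rule: rev_induct)
    case Nil
    then show ?case using xs by (intro exI[of _ "[]"]) simp
  next
    case (snoc y ys)
    then obtain J where J: "indep_mod k mv (xs @ J)" "set J \<subseteq> set ys" "length J \<le> length ys"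
      "set ys \<subseteq> cl (xs @ J)"
      by auto
    have y: "y \<in> Rv" and xJ: "set (xs @ J) \<subseteq> Rv" using xs J snoc.prems by auto
    show ?case
    proof (cases "y \<in> cl (xs @ J)")
      case True
      then show ?thesis using J by (intro exI[of _ J]) auto
    next
      case False
      then have "indep_mod k mv ((xs @ J) @ [y])" using indep_mod_snoc_iff[OF xJ y] J by simp
      moreover have "set ys \<subseteq> cl (xs @ J @ [y])" using J(4) cl_mono[of "xs @ J" "xs @ J @ [y]"] by auto
      moreover have "y \<in> cl (xs @ J @ [y])" using set_subset_cl[of "xs @ J @ [y]"] xJ y by auto
      ultimately show ?thesis using J by (intro exI[of _ "J @ [y]"]) auto
    qed
  qed
  with that show thesis by blast
qed

text \<open>The exchange argument of Steinitz, relative to a common independent prefix \<open>P\<close>.\<close>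

lemma indep_length_le_spanning_rel:
  assumes "set P \<subseteq> Rv" "set B \<subseteq> Rv" "set Y \<subseteq> Rv" "indep_mod k mv (P @ B)" "indep_mod k mv (P @ Y)"
    "set Y \<subseteq> cl (P @ B)"
  shows "length Y \<le> length B"
  using assms
proof (induction B arbitrary: P Y rule: rev_induct)
  case Nil
  show ?case
  proof (cases Y)
    case (Cons y Y')
    have "indep_mod k mv ((P @ [y]) @ Y')" using Nil.prems(5) Cons by simp
    then have "indep_mod k mv (P @ [y])" by (rule indep_mod_appendD)
    moreover have "y \<in> Rv" using Nil.prems(3) Cons by simp
    ultimately have "y \<notin> cl P" using indep_mod_snoc_iff[OF Nil.prems(1)] by blast
    moreover have "y \<in> cl P" using Nil.prems(6) Cons by simp
    ultimately show ?thesis by contradiction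
  qed simp
next
  case (snoc b B)
  have PB: "set (P @ B) \<subseteq> Rv" and b: "b \<in> Rv" using snoc.prems(1,2) by auto
  have indep_PB: "indep_mod k mv (P @ B)"
    using indep_mod_appendD[of k mv "P @ B" "[b]"] snoc.prems(4) by simp
  show ?case
  proof (cases "set Y \<subseteq> cl (P @ B)")
    case True
    have "set B \<subseteq> Rv" using snoc.prems(2) by simp
    with True have "length Y \<le> length B"
      using snoc.IH[OF snoc.prems(1) _ snoc.prems(3) indep_PB snoc.prems(5)] by blast
    then show ?thesis by simp
  next
    case False
    then obtain y where yY: "y \<in> set Y" and y_notin: "y \<notin> cl (P @ B)" by blast
    have y: "y \<in> Rv" using yY snoc.prems(3) by blast
    have "y \<in> cl ((P @ B) @ [b])" using snoc.prems(6) yY by auto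
    then have "cl ((P @ B) @ [b]) \<subseteq> cl ((P @ B) @ [y])"
      by (rule cl_snoc_swap[OF PB b y indep_PB _ y_notin])
    also have "\<dots> = cl ((P @ [y]) @ B)" by (rule cl_set_eq) auto
    finally have Y_sub: "set Y \<subseteq> cl ((P @ [y]) @ B)" using snoc.prems(6) by simp
    obtain Y1 Y2 where Y: "Y = Y1 @ y # Y2" using yY by (meson split_list)
    have "indep_mod k mv ((P @ B) @ [y])" using indep_mod_snoc_iff[OF PB y] indep_PB y_notin by blast
    then have "indep_mod k mv ((P @ [y]) @ B)" by (rule indep_mod_perm) simp
    moreover have "indep_mod k mv ((P @ [y]) @ (Y1 @ Y2))"
      by (rule indep_mod_perm[OF snoc.prems(5)]) (simp add: Y)
    moreover have "set (P @ [y]) \<subseteq> Rv" "set B \<subseteq> Rv" "set (Y1 @ Y2) \<subseteq> Rv"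
      using snoc.prems(1-3) y Y by auto
    moreover have "set (Y1 @ Y2) \<subseteq> cl ((P @ [y]) @ B)" using Y_sub Y by auto
    ultimately have "length (Y1 @ Y2) \<le> length B" using snoc.IH by blast
    then show ?thesis using Y by simp
  qed
qed

lemma indep_length_le_spanning:
  assumes "set B \<subseteq> Rv" "set Y \<subseteq> Rv" "indep_mod k mv Y" "set Y \<subseteq> cl B"
  shows "length Y \<le> length B"
proof -
  obtain J where J: "indep_mod k mv J" "set J \<subseteq> set B" "length J \<le> length B" "set B \<subseteq> cl J"
    using indep_mod_extend_spanning[of "[]" B] indep_mod_Nil assms(1) by auto
  have "set J \<subseteq> Rv" using J(2) assms(1) by blast
  then have "length Y \<le> length J"
    using cl_subset_cl[OF assms(1) _ J(4)] indep_length_le_spanning_rel[of "[]" J Y] assms J(1) by auto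
  with J(3) show ?thesis by simp
qed


lemma indep_mod_imp_indep_zero:
  assumes "indep_mod k mv xs"
  shows "indep_mod k {0} xs"
proof (unfold indep_mod_def, intro allI impI)
  fix M :: "(nat \<Rightarrow> nat) set" and c
  assume H: "finite M \<and> M \<noteq> {} \<and> (\<forall>e\<in>M. \<forall>i\<ge>length xs. e i = 0) \<and> (\<forall>e\<in>M. c e \<in> k \<and> c e \<notin> {0})"
  then have "mpoly_eval M c xs \<notin> mv" using k_inter_mv by (intro indep_modE[OF assms]) auto
  then show "mpoly_eval M c xs \<notin> {0}" using zero_in_mv by auto
qed

lemma alg_indep_mod_mv_iff: "alg_indep_mod k mv xs \<longleftrightarrow> indep_mod k mv xs"
  by (rule alg_indep_mod_iff_indep_mod) (use k_inter_mv in blast)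

lemma alg_indep_mod_zero_iff: "alg_indep_mod k {0} xs \<longleftrightarrow> indep_mod k {0} xs"
  by (rule alg_indep_mod_iff_indep_mod) simp

lemma indep_mod_over_subring:
  assumes Rp: "Rp \<subseteq> Rv" "is_subring Rp" "k \<subseteq> Rp" "Rp \<subseteq> cl xs" and xs: "set xs \<subseteq> Rv"
  shows "set J \<subseteq> Rv \<Longrightarrow> indep_mod k mv (xs @ J) \<Longrightarrow> indep_mod Rp mv J"
proof (induction J rule: rev_induct)
  case Nil
  show ?case by (rule indep_mod_Nil)
next
  case (snoc a J)
  have a: "a \<in> Rv" and J: "set J \<subseteq> Rv" and xsJ: "set (xs @ J) \<subseteq> Rv" using snoc.prems(1) xs by auto
  have "indep_mod k mv ((xs @ J) @ [a])" using snoc.prems(2) by simp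
  then have indep: "indep_mod k mv (xs @ J)" and a_notin: "a \<notin> cl (xs @ J)"
    using indep_mod_snoc_iff[OF xsJ a] by auto
  have "\<not> algebraic_mod mv (adjoin Rp J) a"
  proof
    assume alg: "algebraic_mod mv (adjoin Rp J) a"
    have "Rp \<subseteq> cl (xs @ J)" using Rp(4) cl_mono[of xs "xs @ J"] by auto
    then have "adjoin Rp J \<subseteq> cl (xs @ J)"
      using adjoin_least[OF is_subring_cl[OF xsJ] _ ] set_subset_cl[OF xsJ] by auto
    moreover have "adjoin Rp J \<subseteq> Rv" by (rule adjoin_least[OF is_subring_Rv Rp(1) J])
    moreover have "0 \<in> adjoin Rp J" using const_in_adjoin Rp(2) unfolding is_subring_def by blast
    ultimately have "a \<in> cl (xs @ J)" using cl_trans[OF xsJ _ _ _ a alg] by blast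
    with a_notin show False ..
  qed
  then show ?case by (rule indep_mod_snocI[OF snoc.IH[OF J indep]])
qed

lemma adjoin_nonzero_notin_mv:
  assumes xs: "set xs \<subseteq> Rv" "indep_mod k mv xs" and v: "v \<in> adjoin k xs" "v \<noteq> 0"
  shows "v \<notin> mv"
proof -
  obtain M c where Mc: "finite M" "\<forall>e\<in>M. \<forall>j\<ge>length xs. e j = 0" "\<forall>e\<in>M. c e \<in> k \<and> c e \<notin> {0}"
    "v - mpoly_eval M c xs \<in> {0}"
    using adjoin_mod_ideal[OF is_subring_UNIV is_ideal_zero _ _ v(1)] by blast
  then have "M \<noteq> {}" using v(2) by (auto simp: mpoly_eval_eq_sum_monom)
  moreover have "\<forall>e\<in>M. c e \<in> k \<and> c e \<notin> mv" using Mc(3) k_inter_mv by blast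
  ultimately have "mpoly_eval M c xs \<notin> mv" using indep_modE[OF xs(2) Mc(1) _ Mc(2)] by blast
  then show ?thesis using Mc(4) by simp
qed

lemma indep_zero_snoc_mv:
  assumes xs: "set xs \<subseteq> Rv" "indep_mod k mv xs" and t: "t \<in> mv" "t \<noteq> 0"
  shows "indep_mod k {0} (xs @ [t])"
proof (rule indep_mod_snocI[OF indep_mod_imp_indep_zero[OF xs(2)]], rule notI)
  assume "algebraic_mod {0} (adjoin k xs) t"
  then obtain D c where D: "finite D" "\<forall>i\<in>D. c i \<in> adjoin k xs" "\<exists>i\<in>D. c i \<noteq> 0"
      "(\<Sum>i\<in>D. c i * t ^ i) = 0"
    unfolding algebraic_mod_def by auto
  define D' where "D' = {i\<in>D. c i \<noteq> 0}"
  have "(\<Sum>i\<in>D'. c i * t ^ i) = 0"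
    using D(4) sum.mono_neutral_right[OF D(1), of D' "\<lambda>i. c i * t ^ i"] by (auto simp: D'_def)
  moreover have "\<forall>i\<in>D'. c i \<in> Rv \<and> c i \<notin> mv"
    using D(2) adjoin_k_subset_Rv[OF xs(1)] adjoin_nonzero_notin_mv[OF xs] by (auto simp: D'_def)
  moreover have "finite D'" "D' \<noteq> {}" using D(1,3) by (auto simp: D'_def)
  ultimately show False using sum_unit_coeffs_power_nonzero t by blast
qed

lemma indep_mod_length_less_trdeg:
  assumes K': "has_trdeg k K' {0} m" and t: "t \<in> K'" "t \<in> mv" "t \<noteq> 0"
    and xs: "set xs \<subseteq> K' \<inter> Rv" "indep_mod k mv xs"
  shows "length xs < m"
proof -
  have "indep_mod k {0} (xs @ [t])" using xs t by (intro indep_zero_snoc_mv) auto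
  moreover have "set (xs @ [t]) \<subseteq> K'" using xs(1) t(1) by auto
  ultimately have "length (xs @ [t]) \<le> m"
    using has_trdeg_length_le[OF K'] alg_indep_mod_zero_iff by blast
  then show ?thesis by simp
qed

lemma ex_indep_mod_spanning:
  assumes S: "S \<subseteq> Rv" and bound: "\<And>xs. set xs \<subseteq> S \<Longrightarrow> indep_mod k mv xs \<Longrightarrow> length xs < N"
  obtains xs where "set xs \<subseteq> S" "indep_mod k mv xs" "S \<subseteq> cl xs"
proof -
  obtain xs where xs: "set xs \<subseteq> S \<and> indep_mod k mv xs"
    and longest: "\<And>ys. set ys \<subseteq> S \<and> indep_mod k mv ys \<Longrightarrow> length ys \<le> length xs"
    using ex_has_greatest_nat[of "\<lambda>xs. set xs \<subseteq> S \<and> indep_mod k mv xs" "[]" length N]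
      indep_mod_Nil bound by auto
  have "S \<subseteq> cl xs"
  proof
    fix a assume a: "a \<in> S"
    then have "\<not> indep_mod k mv (xs @ [a])" using longest[of "xs @ [a]"] xs by auto
    then show "a \<in> cl xs" using indep_mod_snoc_iff[of xs a] xs a S by blast
  qed
  with xs that show thesis by blast
qed

text \<open>A residually independent \<open>xs\<close> spanning \<open>K' \<inter> Rv\<close> is extended by part \<open>J\<close> of a residual
  transcendence basis \<open>ys\<close> of \<open>Rv\<close> to a residual spanning set. Then \<open>J\<close> is algebraically
  independent over \<open>K'\<close>, and counting transcendence degrees gives
  \<open>n - 1 \<le> length xs + length J\<close> and \<open>m + length J \<le> n\<close>.\<close>

lemma trdeg_le_Suc_indep_mod_length:
  assumes K': "is_subfield K'" "k \<subseteq> K'" "has_trdeg k K' {0} m"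
    and trdeg: "has_trdeg k UNIV {0} n" "has_trdeg k Rv mv (n - 1)"
    and xs: "set xs \<subseteq> K' \<inter> Rv" "indep_mod k mv xs" "K' \<inter> Rv \<subseteq> cl xs"
  shows "m \<le> length xs + 1"
proof -
  have xs_Rv: "set xs \<subseteq> Rv" using xs(1) by blast
  obtain ys where ys: "set ys \<subseteq> Rv" "length ys = n - 1" "indep_mod k mv ys"
    using has_trdegE[OF trdeg(2)] alg_indep_mod_mv_iff by metis
  obtain J where J: "indep_mod k mv (xs @ J)" "set J \<subseteq> set ys" "length J \<le> length ys" "set ys \<subseteq> cl (xs @ J)"
    by (rule indep_mod_extend_spanning[OF xs_Rv xs(2) ys(1)])
  have J_Rv: "set J \<subseteq> Rv" using J(2) ys(1) by blast
  have "n - 1 \<le> length (xs @ J)"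
    using indep_length_le_spanning[of "xs @ J" ys] xs_Rv J_Rv ys J(4) by simp
  moreover have "m + length J \<le> n"
  proof -
    have "is_subring (K' \<inter> Rv)" by (rule is_subring_Int[OF is_subring_subfield[OF K'(1)] is_subring_Rv])
    then have "indep_mod (K' \<inter> Rv) mv J"
      using indep_mod_over_subring[OF _ _ _ xs(3) xs_Rv J_Rv J(1)] K'(2) k_subset_Rv by blast
    then have "indep_mod K' {0} J" by (rule indep_zero_of_indep_mod_val_ring[OF K'(1) J_Rv])
    moreover obtain zs where zs: "set zs \<subseteq> K'" "length zs = m" "indep_mod k {0} zs"
      using has_trdegE[OF K'(3)] alg_indep_mod_zero_iff by metis
    ultimately have "indep_mod k {0} (zs @ J)" using indep_zero_append[OF K'(1,2)] by blast
    then have "length (zs @ J) \<le> n"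
      using has_trdeg_length_le[OF trdeg(1)] alg_indep_mod_zero_iff by blast
    then show ?thesis using zs(2) by simp
  qed
  ultimately show ?thesis by simp
qed

end

theorem proposition15:
  fixes k K' :: "'a::field set" and \<nu> :: "'a \<Rightarrow> int" and n m :: nat
  assumes "alg_closed_subfield k"
    and "fin_gen_over k (UNIV :: 'a set)"
    and "has_trdeg k UNIV {0} n"
    and "discrete_valuation \<nu>"
    and "k \<subseteq> val_ring \<nu>"
    and "has_trdeg k (val_ring \<nu>) (val_ideal \<nu>) (n - 1)"
    and "is_subfield K'" and "k \<subseteq> K'" and "fin_gen_over k K'"
    and "has_trdeg k K' {0} m" and "m \<le> n"
    and "K' \<inter> val_ideal \<nu> \<noteq> {0}"
  shows "has_trdeg k (K' \<inter> val_ring \<nu>) (K' \<inter> val_ideal \<nu>) (m - 1)"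
proof -
  interpret valued_field_over \<nu> k
    using assms(1,4,5) by unfold_locales (auto simp: alg_closed_subfield_def)
  obtain t where t: "t \<in> K'" "t \<in> mv" "t \<noteq> 0"
    using assms(7,12) zero_in_mv unfolding is_subfield_def by blast
  have upper: "length xs < m" if "set xs \<subseteq> K' \<inter> Rv" "indep_mod k mv xs" for xs
    using indep_mod_length_less_trdeg[OF assms(10) t that] .
  obtain xs where xs: "set xs \<subseteq> K' \<inter> Rv" "indep_mod k mv xs" "K' \<inter> Rv \<subseteq> cl xs"
    using ex_indep_mod_spanning[of "K' \<inter> Rv" m] upper by blast
  have len: "length xs = m - 1"
    using upper[OF xs(1,2)] trdeg_le_Suc_indep_mod_length[OF assms(7,8,10,3,6) xs] by linarith
  have indep_iff: "alg_indep_mod k (K' \<inter> mv) ys \<longleftrightarrow> indep_mod k mv ys" if "set ys \<subseteq> K' \<inter> Rv" for ys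
    using alg_indep_mod_Int[OF is_subring_subfield[OF assms(7)] assms(8)] alg_indep_mod_mv_iff that by blast
  show ?thesis unfolding has_trdeg_def
  proof (intro conjI allI impI)
    show "\<exists>xs. set xs \<subseteq> K' \<inter> Rv \<and> length xs = m - 1 \<and> alg_indep_mod k (K' \<inter> mv) xs"
      using xs len indep_iff by blast
    fix ys assume "set ys \<subseteq> K' \<inter> Rv \<and> alg_indep_mod k (K' \<inter> mv) ys"
    then show "length ys \<le> m - 1" using upper indep_iff by fastforce
  qed
qed

end
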